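(* Let $(d(t),\,t\ge0)$ be a nonnegative, locally integrable demand function, let $(E_i(0),\,i\in\mathcal S)$ be a given initial energy configuration with $0\le E_i(0)\le\overline E_i$, and let $T\in(0,\infty]$. Among all discharge-only policies, the unserved energy demand $\int_0^T\max\bigl(d(t)-\sum_{i\in\mathcal S}r_i(t),0\bigr)\,dt$ is minimised by the GGDDF policy, and its minimum value is $$\max_{p\ge0}\bigl(e_D^{0,T}(p)-e_S^{0}(p)\bigr).$$
   Context: A finite set $\mathcal S$ of energy stores is given. Store $i\in\mathcal S$ has capacity $\overline E_i>0$ and maximum discharge rate $P_i>0$. A (discharge-only) policy is a choice of measurable rate functions $(r_i(t),\,t\ge0)$, $i\in\mathcal S$, with stored energies $E_i(t)=E_i(0)-\int_0^t r_i(u)\,du$, subject to $0\le E_i(t)\le\overline E_i$, $0\le r_i(t)\le P_i$ and $\sum_{i\in\mathcal S}r_i(t)\le d(t)$ for all $t\ge0$, where $(d(t),\,t\ge0)$ is a nonnegative demand function. The unserved energy over $[0,T]$ is $\int_0^T\max\bigl(d(t)-\sum_{i}r_i(t),0\bigr)dt$. Burst-power profile at time $t$: $s^t(u)=\sum_{i\in\mathcal S:\,E_i(t)/P_i\ge u}P_i$ for $u\ge 0$ (the quantity $E_i(t)/P_i$ is the discharge-duration of store $i$). Energy-power transform of the stores at time $t$: $e_S^t(p)=\int_0^\infty\max(0,s^t(u)-p)\,du$, $p\ge0$. Energy-power transform of the demand on $[t,T]$: $e_D^{t,T}(p)=\int_t^T\max(0,d(u)-p)\,du$, $p\ge0$ (with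 $T=\infty$ allowed). GGDDF (greedy greatest-discharge-duration-first) policy: at (almost) every time $t$, the total served rate is $\bar d(t)=\min\bigl(d(t),\sum_{i:E_i(t)>0}P_i\bigr)$, and it is allocated as follows: the nonempty stores are partitioned into groups $G_1,G_2,\dots$ of equal discharge-duration $E_i(t)/P_i$, listed in strictly decreasing order of that duration; letting $m$ be the least index with $\sum_{k\le m}\sum_{i\in G_k}P_i\ge\bar d(t)$, every store in $G_k$ with $k<m$ discharges at rate $P_i$, every store $i\in G_m$ discharges at rate $\lambda P_i$ with $\lambda\in(0,1]$ chosen so that $\sum_i r_i(t)=\bar d(t)$, and all other stores have rate $0$ (all rates are $0$ if $\bar d(t)=0$). *)

theory Defs
  imports "HOL-Analysis.Analysis"
begin

text \<open>Stores are indexed by a finite set S of some type 'i. A policy is a family of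
rate functions r i :: real \<Rightarrow> real (only t \<ge> 0 matters).\<close>

definition stored_energy :: "('i \<Rightarrow> real) \<Rightarrow> ('i \<Rightarrow> real \<Rightarrow> real) \<Rightarrow> 'i \<Rightarrow> real \<Rightarrow> real" where
  "stored_energy E0 r i t = E0 i - (LINT u:{0..t}|lborel. r i u)"

definition is_policy ::
  "'i set \<Rightarrow> ('i \<Rightarrow> real) \<Rightarrow> ('i \<Rightarrow> real) \<Rightarrow> ('i \<Rightarrow> real) \<Rightarrow> (real \<Rightarrow> real)
   \<Rightarrow> ('i \<Rightarrow> real \<Rightarrow> real) \<Rightarrow> bool" where
  "is_policy S Ebar P E0 d r \<longleftrightarrow>
     (\<forall>i\<in>S. r i \<in> borel_measurable lborel) \<and>
     (\<forall>t\<ge>0. \<forall>i\<in>S. 0 \<le> stored_energy E0 r i t \<and> stored_energy E0 r i t \<le> Ebar i) \<and>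
     (\<forall>t\<ge>0. \<forall>i\<in>S. 0 \<le> r i t \<and> r i t \<le> P i) \<and>
     (\<forall>t\<ge>0. (\<Sum>i\<in>S. r i t) \<le> d t)"

definition unserved :: "'i set \<Rightarrow> (real \<Rightarrow> real) \<Rightarrow> ('i \<Rightarrow> real \<Rightarrow> real) \<Rightarrow> ereal \<Rightarrow> ennreal" where
  "unserved S d r T =
     (\<integral>\<^sup>+ t. indicator {t. 0 \<le> t \<and> ereal t \<le> T} t * ennreal (max (d t - (\<Sum>i\<in>S. r i t)) 0) \<partial>lborel)"

definition burst_power :: "'i set \<Rightarrow> ('i \<Rightarrow> real) \<Rightarrow> ('i \<Rightarrow> real) \<Rightarrow> real \<Rightarrow> real" where
  "burst_power S P E u = (\<Sum>i\<in>{i\<in>S. E i / P i \<ge> u}. P i)"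

definition ep_stores :: "'i set \<Rightarrow> ('i \<Rightarrow> real) \<Rightarrow> ('i \<Rightarrow> real) \<Rightarrow> real \<Rightarrow> ennreal" where
  "ep_stores S P E p =
     (\<integral>\<^sup>+ u. indicator {0..} u * ennreal (max 0 (burst_power S P E u - p)) \<partial>lborel)"

definition ep_demand :: "(real \<Rightarrow> real) \<Rightarrow> real \<Rightarrow> ereal \<Rightarrow> real \<Rightarrow> ennreal" where
  "ep_demand d t T p =
     (\<integral>\<^sup>+ u. indicator {u. t \<le> u \<and> ereal u \<le> T} u * ennreal (max 0 (d u - p)) \<partial>lborel)"

text \<open>The groups of equal discharge duration E i / P i are written out
  directly: G_m is the group with duration theta, the groups G_k, k < m, are those
  nonempty stores with strictly larger duration.\<close>
definition ggddf_rates :: "'i set \<Rightarrow> ('i \<Rightarrow> real) \<Rightarrow> ('i \<Rightarrow> real) \<Rightarrow> real \<Rightarrow> ('i \<Rightarrow> real) \<Rightarrow> bool" where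
  "ggddf_rates S P E dv rho \<longleftrightarrow>
     (let dbar = min dv (\<Sum>i\<in>{i\<in>S. E i > 0}. P i) in
       (dbar = 0 \<longrightarrow> (\<forall>i\<in>S. rho i = 0)) \<and>
       (dbar \<noteq> 0 \<longrightarrow>
          (\<exists>\<theta> lam. (\<exists>j\<in>S. E j > 0 \<and> E j / P j = \<theta>) \<and> 0 < lam \<and> lam \<le> 1 \<and>
                 (\<forall>i\<in>S. rho i = (if E i > 0 \<and> E i / P i > \<theta> then P i
                                   else if E i > 0 \<and> E i / P i = \<theta> then lam * P i
                                   else 0)) \<and>
                 (\<Sum>i\<in>S. rho i) = dbar)))"

definition is_ggddf_policy ::
  "'i set \<Rightarrow> ('i \<Rightarrow> real) \<Rightarrow> ('i \<Rightarrow> real) \<Rightarrow> ('i \<Rightarrow> real) \<Rightarrow> (real \<Rightarrow> real)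
   \<Rightarrow> ('i \<Rightarrow> real \<Rightarrow> real) \<Rightarrow> bool" where
  "is_ggddf_policy S Ebar P E0 d r \<longleftrightarrow>
     is_policy S Ebar P E0 d r \<and>
     (AE t in lborel. t \<ge> 0 \<longrightarrow>
        ggddf_rates S P (\<lambda>i. stored_energy E0 r i t) (d t) (\<lambda>i. r i t))"

end

theory Submission
  imports Defs
begin

text \<open>
  Lower bound: at every instant the demand above a level \<open>p\<close> splits into unserved demand and
  served rate above \<open>p\<close>. On a set of measure \<open>L\<close> store \<open>i\<close> delivers at most
  \<open>min E\<^sub>i (P\<^sub>i L)\<close>, and these bounds sum to at most \<open>e\<^sub>S(p) + p L\<close>; so every policy serves
  at most \<open>e\<^sub>S(p)\<close> above \<open>p\<close> and leaves at least \<open>e\<^sub>D(p) - e\<^sub>S(p)\<close> unserved.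

  Attainment: under GGDDF let \<open>N\<close> be the stores that never empty on \<open>[0, T]\<close>. A store that is
  not longer than another stays so, hence the stores of \<open>N\<close> stay strictly longer than all others.
  The others therefore discharge only while \<open>N\<close> runs at full power \<open>p\<^sup>* = \<Sum>\<^sub>i\<^sub>\<in>\<^sub>N P\<^sub>i\<close>, and each
  of them is emptied; both inequalities above become equalities at \<open>p = p\<^sup>*\<close>.

  Existence: discharging the duration classes with the GGDDF rates of their current order stays
  GGDDF until two classes meet; restarting there lowers the number of distinct durations.
\<close>

lemma set_integrable_Icc_bounded:
  fixes f :: "real \<Rightarrow> real"
  assumes "f \<in> borel_measurable lborel" "\<And>t. t \<in> {a..b} \<Longrightarrow> \<bar>f t\<bar> \<le> C"
  shows "set_integrable lborel {a..b} f"
  unfolding set_integrable_def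
  by (rule integrableI_bounded_set_indicator[where B=C]) (use assms in \<open>auto simp: emeasure_lborel_Icc_eq\<close>)

lemma integrable_on_Icc_bounded:
  fixes f :: "real \<Rightarrow> real"
  assumes "f \<in> borel_measurable lborel" "\<And>t. t \<in> {a..b} \<Longrightarrow> \<bar>f t\<bar> \<le> C"
  shows "f integrable_on {a..b}"
  using set_borel_integral_eq_integral(1)[OF set_integrable_Icc_bounded[OF assms]] .

lemma set_lebesgue_integral_Icc_bounded:
  fixes f :: "real \<Rightarrow> real"
  assumes "f \<in> borel_measurable lborel" "\<And>t. t \<in> {a..b} \<Longrightarrow> \<bar>f t\<bar> \<le> C"
  shows "(LINT x:{a..b}|lborel. f x) = integral {a..b} f"
  using set_borel_integral_eq_integral(2)[OF set_integrable_Icc_bounded[OF assms]] .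

lemma nn_integral_Icc_bounded:
  fixes f :: "real \<Rightarrow> real"
  assumes "f \<in> borel_measurable lborel" "\<And>t. t \<in> {a..b} \<Longrightarrow> 0 \<le> f t \<and> f t \<le> C"
  shows "(\<integral>\<^sup>+t. indicator {a..b} t * ennreal (f t) \<partial>lborel) = ennreal (integral {a..b} f)"
proof -
  have "f integrable_on {a..b}"
    using assms by (intro integrable_on_Icc_bounded[where C=C]) auto
  then have "(\<integral>\<^sup>+t. ennreal (f t) * indicator {a..b} t \<partial>lborel) = ennreal (integral {a..b} f)"
    using assms(2) by (intro nn_integral_has_integral_lebesgue' integrable_integral) auto
  then show ?thesis by (simp add: mult.commute)
qed

lemma nn_integral_atLeast_le:
  fixes g :: "real \<Rightarrow> ennreal"
  assumes "g \<in> borel_measurable lborel"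
    and "\<And>M. 0 \<le> M \<Longrightarrow> (\<integral>\<^sup>+t. indicator {0..M} t * g t \<partial>lborel) \<le> C"
  shows "(\<integral>\<^sup>+t. indicator {0..} t * g t \<partial>lborel) \<le> C"
proof -
  define f where "f n t = indicator {0..real n} t * g t" for n :: nat and t
  have "incseq f"
    unfolding f_def by (intro monoI le_funI mult_right_mono) (auto split: split_indicator)
  moreover have "\<And>n. f n \<in> borel_measurable lborel"
    unfolding f_def using assms(1) by measurable
  moreover have "(SUP n. f n t) = indicator {0..} t * g t" for t
  proof (cases "0 \<le> t")
    case True
    obtain N :: nat where "t \<le> real N" using real_arch_simple by blast
    then have "f N t = indicator {0..} t * g t" using True unfolding f_def by simp
    then show ?thesis
      by (intro antisym SUP_least) (auto simp: f_def split: split_indicator intro: SUP_upper2[of N])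
  qed (simp add: f_def)
  ultimately have "(\<integral>\<^sup>+t. indicator {0..} t * g t \<partial>lborel) = (SUP n. integral\<^sup>N lborel (f n))"
    by (simp flip: nn_integral_monotone_convergence_SUP)
  also have "\<dots> \<le> C" unfolding f_def by (intro SUP_least assms(2)) auto
  finally show ?thesis .
qed

lemma borel_measurable_locally_integrable_on_nonneg:
  fixes d :: "real \<Rightarrow> real"
  assumes "\<forall>a\<ge>0. set_integrable lborel {0..a} d"
  shows "(\<lambda>t. if 0 \<le> t then d t else 0) \<in> borel_measurable lborel"
proof (rule borel_measurable_LIMSEQ_real)
  fix n :: nat
  have "integrable lborel (\<lambda>x. indicator {0..real n} x *\<^sub>R d x)"
    using assms unfolding set_integrable_def by auto
  then show "(\<lambda>x. indicator {0..real n} x *\<^sub>R d x) \<in> borel_measurable lborel" by auto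
next
  fix x :: real
  obtain N :: nat where "x \<le> real N" using real_arch_simple by blast
  then have "\<forall>\<^sub>F n in sequentially. indicator {0..real n} x *\<^sub>R d x = (if 0 \<le> x then d x else 0)"
    unfolding eventually_sequentially by (intro exI[of _ N]) (auto simp: indicator_def)
  then show "(\<lambda>n. indicator {0..real n} x *\<^sub>R d x) \<longlonglongrightarrow> (if 0 \<le> x then d x else 0)"
    by (rule tendsto_eventually)
qed

text \<open>After the last time at which \<open>H \<le> 0\<close>, \<open>H\<close> is positive and hence nonincreasing.\<close>
lemma integral_flow_stays_nonpos:
  fixes H h :: "real \<Rightarrow> real"
  assumes cont: "continuous_on {a..b} H"
    and flow: "\<And>c t. a \<le> c \<Longrightarrow> c \<le> t \<Longrightarrow> t \<le> b \<Longrightarrow> H t = H c - integral {c..t} h"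
    and hm: "h \<in> borel_measurable lborel" and hb: "\<And>t. t \<in> {a..b} \<Longrightarrow> \<bar>h t\<bar> \<le> C"
    and ae: "AE s in lborel. a \<le> s \<longrightarrow> s \<le> b \<longrightarrow> 0 < H s \<longrightarrow> 0 \<le> h s"
    and Ha: "H a \<le> 0" and ab: "a \<le> b"
  shows "H b \<le> 0"
proof (rule ccontr)
  assume Hb: "\<not> H b \<le> 0"
  define Z where "Z = {a..b} \<inter> H -` {..0}"
  have Zc: "closed Z" unfolding Z_def by (rule continuous_closed_preimage[OF cont]) auto
  have aZ: "a \<in> Z" unfolding Z_def using Ha ab by auto
  have Zb: "bdd_above Z" unfolding Z_def by (intro bdd_aboveI[of _ b]) auto
  define c where "c = Sup Z"
  have "c \<in> Z" unfolding c_def using closed_contains_Sup[OF _ Zb Zc] aZ by auto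
  then have c: "a \<le> c" "c \<le> b" "H c \<le> 0" unfolding Z_def by auto
  have after: "0 < H t" if "c < t" "t \<le> b" for t
  proof (rule ccontr)
    assume "\<not> 0 < H t"
    then have "t \<in> Z" unfolding Z_def using that c by auto
    then have "t \<le> c" unfolding c_def using Zb by (rule cSup_upper)
    then show False using that by simp
  qed
  have "integral {c..b} h = (LINT x:{c..b}|lborel. h x)"
    using c by (intro set_lebesgue_integral_Icc_bounded[symmetric, OF hm, of _ _ C] hb) auto
  also have "0 \<le> \<dots>"
    unfolding set_lebesgue_integral_def
  proof (rule integral_nonneg_AE)
    show "AE x in lborel. 0 \<le> indicator {c..b} x *\<^sub>R h x"
      using ae AE_lborel_singleton[of c]
    proof eventually_elim
      case (elim x)
      then show ?case using after[of x] c by (auto simp: indicator_def)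
    qed
  qed
  finally have "H b \<le> H c" using flow[of c b] c by simp
  then show False using Hb c by simp
qed

section \<open>The GGDDF allocation at one instant\<close>

definition power_above :: "'i set \<Rightarrow> ('i \<Rightarrow> real) \<Rightarrow> ('i \<Rightarrow> real) \<Rightarrow> real \<Rightarrow> real" where
  "power_above S P E v = (\<Sum>j\<in>{j\<in>S. 0 < E j \<and> v < E j / P j}. P j)"

definition power_at :: "'i set \<Rightarrow> ('i \<Rightarrow> real) \<Rightarrow> ('i \<Rightarrow> real) \<Rightarrow> real \<Rightarrow> real" where
  "power_at S P E v = (\<Sum>j\<in>{j\<in>S. 0 < E j \<and> E j / P j = v}. P j)"

text \<open>The duration class \<open>v\<close> serves what is left of the demand \<open>x\<close> once all longer classes
  discharge at full power. For a duration without nonempty stores, in particular \<open>v = 0\<close>, the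
  division by \<open>power_at S P E v = 0\<close> makes the fraction \<open>0\<close>.\<close>
definition fill_fraction :: "'i set \<Rightarrow> ('i \<Rightarrow> real) \<Rightarrow> ('i \<Rightarrow> real) \<Rightarrow> real \<Rightarrow> real \<Rightarrow> real" where
  "fill_fraction S P E v x = max 0 (min 1 ((x - power_above S P E v) / power_at S P E v))"

definition ggddf_allocation :: "'i set \<Rightarrow> ('i \<Rightarrow> real) \<Rightarrow> ('i \<Rightarrow> real) \<Rightarrow> real \<Rightarrow> 'i \<Rightarrow> real" where
  "ggddf_allocation S P E x i = P i * fill_fraction S P E (E i / P i) x"

lemma fill_fraction_bounds: "0 \<le> fill_fraction S P E v x" "fill_fraction S P E v x \<le> 1"
  unfolding fill_fraction_def by auto

context
  fixes S :: "'i set" and P :: "'i \<Rightarrow> real"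
  assumes fin: "finite S" and Ppos: "\<forall>i\<in>S. 0 < P i"
begin

lemma power_above_nonneg: "0 \<le> power_above S P E v"
  unfolding power_above_def using Ppos by (intro sum_nonneg) auto

lemma power_at_nonneg: "0 \<le> power_at S P E v"
  unfolding power_at_def using Ppos by (intro sum_nonneg) auto

lemma power_at_pos:
  assumes "i \<in> S" "0 < E i"
  shows "0 < power_at S P E (E i / P i)"
proof -
  have "P i \<le> power_at S P E (E i / P i)"
    unfolding power_at_def using assms fin Ppos by (intro member_le_sum) auto
  then show ?thesis using assms Ppos by force
qed

lemma power_above_add_power_at_le:
  assumes "v < w"
  shows "power_above S P E w + power_at S P E w \<le> power_above S P E v"
proof -
  have "power_above S P E w + power_at S P E w
      = (\<Sum>j\<in>{j\<in>S. 0 < E j \<and> w < E j / P j} \<union> {j\<in>S. 0 < E j \<and> E j / P j = w}. P j)"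
    unfolding power_above_def power_at_def using fin by (subst sum.union_disjoint) auto
  also have "\<dots> \<le> power_above S P E v"
    unfolding power_above_def using assms fin Ppos by (intro sum_mono2) auto
  finally show ?thesis .
qed

lemma fill_fraction_zero_duration: "fill_fraction S P E 0 x = 0"
proof -
  have "power_at S P E 0 = 0" unfolding power_at_def using Ppos by (intro sum.neutral) auto
  then show ?thesis unfolding fill_fraction_def by simp
qed

lemma fill_fraction_eq_0:
  assumes "x \<le> power_above S P E v"
  shows "fill_fraction S P E v x = 0"
proof -
  have "(x - power_above S P E v) / power_at S P E v \<le> 0"
    using assms power_at_nonneg by (intro divide_nonpos_nonneg) auto
  then show ?thesis unfolding fill_fraction_def by simp
qed

lemma fill_fraction_eq_1:
  assumes "0 < power_at S P E v" "power_above S P E v + power_at S P E v \<le> x"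
  shows "fill_fraction S P E v x = 1"
proof -
  have "1 \<le> (x - power_above S P E v) / power_at S P E v" using assms by (simp add: field_simps)
  then show ?thesis unfolding fill_fraction_def by simp
qed

lemma ggddf_threshold_exists:
  assumes xpos: "0 < x" and nonempty: "\<exists>i\<in>S. 0 < E i"
  shows "\<exists>\<theta>. (\<exists>j\<in>S. 0 < E j \<and> E j / P j = \<theta>) \<and> power_above S P E \<theta> < x \<and>
    (\<forall>k\<in>S. 0 < E k \<longrightarrow> power_above S P E (E k / P k) < x \<longrightarrow> \<theta> \<le> E k / P k)"
proof -
  define Ne where "Ne = {i\<in>S. E i > 0}"
  define A where "A = power_above S P E"
  have fin_Ne: "finite Ne" and Ne_nonempty: "Ne \<noteq> {}" using fin nonempty unfolding Ne_def by auto
  define \<Theta> where "\<Theta> = {E j / P j |j. j \<in> Ne \<and> A (E j / P j) < x}"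
  have fin\<Theta>: "finite \<Theta>" unfolding \<Theta>_def using fin_Ne by auto
  define M where "M = Max ((\<lambda>j. E j / P j) ` Ne)"
  have "M \<in> (\<lambda>j. E j / P j) ` Ne" unfolding M_def using fin_Ne Ne_nonempty by (intro Max_in) auto
  then obtain jm where jm: "jm \<in> Ne" "E jm / P jm = M" by auto
  have jmax: "\<forall>j\<in>Ne. E j / P j \<le> M" unfolding M_def using fin_Ne by auto
  have "A M = 0" unfolding A_def power_above_def using jmax unfolding Ne_def
    by (intro sum.neutral) (auto simp: not_less[symmetric])
  then have "M \<in> \<Theta>" unfolding \<Theta>_def using jm xpos by force
  then have \<Theta>_nonempty: "\<Theta> \<noteq> {}" by auto
  define \<theta> where "\<theta> = Min \<Theta>"
  have "\<theta> \<in> \<Theta>" unfolding \<theta>_def using fin\<Theta> \<Theta>_nonempty by (rule Min_in)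
  then obtain j0 where j0: "j0 \<in> Ne" "E j0 / P j0 = \<theta>" "A \<theta> < x" unfolding \<Theta>_def by auto
  have min_\<theta>: "\<And>j. j \<in> Ne \<Longrightarrow> A (E j / P j) < x \<Longrightarrow> \<theta> \<le> E j / P j"
    unfolding \<theta>_def using fin\<Theta> by (intro Min_le) (auto simp: \<Theta>_def)
  show ?thesis
  proof (intro exI conjI ballI impI)
    show "\<exists>j\<in>S. 0 < E j \<and> E j / P j = \<theta>" using j0 unfolding Ne_def by auto
    show "power_above S P E \<theta> < x" using j0 unfolding A_def by simp
    show "\<theta> \<le> E k / P k" if "k \<in> S" "0 < E k" "power_above S P E (E k / P k) < x" for k
      using min_\<theta>[of k] that unfolding Ne_def A_def by simp
  qed
qed

lemma ggddf_allocation_threshold_form: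
  assumes Enn: "\<forall>i\<in>S. 0 \<le> E i" and \<theta>: "power_above S P E \<theta> < x"
    and \<theta>_min: "\<forall>k\<in>S. 0 < E k \<longrightarrow> power_above S P E (E k / P k) < x \<longrightarrow> \<theta> \<le> E k / P k"
  shows "\<forall>i\<in>S. ggddf_allocation S P E x i = (if E i > 0 \<and> E i / P i > \<theta> then P i
    else if E i > 0 \<and> E i / P i = \<theta> then fill_fraction S P E \<theta> x * P i else 0)"
proof
  define A where "A = power_above S P E"
  define B where "B = power_at S P E"
  fix i assume i: "i \<in> S"
  show "ggddf_allocation S P E x i = (if E i > 0 \<and> E i / P i > \<theta> then P i
    else if E i > 0 \<and> E i / P i = \<theta> then fill_fraction S P E \<theta> x * P i else 0)"
  proof (cases "E i > 0")
    case False
    then have "E i = 0" using Enn i by force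
    then show ?thesis unfolding ggddf_allocation_def using fill_fraction_zero_duration by simp
  next
    case Ei: True
    consider "E i / P i > \<theta>" | "E i / P i = \<theta>" | "E i / P i < \<theta>" by linarith
    then show ?thesis
    proof cases
      case 1
      have "A (E i / P i) + B (E i / P i) \<le> A \<theta>" unfolding A_def B_def using power_above_add_power_at_le[OF 1] .
      then have "fill_fraction S P E (E i / P i) x = 1" using \<theta> power_at_pos[OF i, of E, OF Ei]
        by (intro fill_fraction_eq_1) (auto simp: A_def B_def)
      then show ?thesis using 1 Ei unfolding ggddf_allocation_def by simp
    next
      case 2 then show ?thesis using Ei unfolding ggddf_allocation_def by simp
    next
      case 3
      have "\<not> A (E i / P i) < x" using \<theta>_min 3 i Ei unfolding A_def by force
      then have "fill_fraction S P E (E i / P i) x = 0" using fill_fraction_eq_0 by (simp add: A_def)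
      then show ?thesis using 3 unfolding ggddf_allocation_def by simp
    qed
  qed
qed

lemma sum_ggddf_allocation:
  assumes Enn: "\<forall>i\<in>S. 0 \<le> E i" and j0: "j0 \<in> S" "0 < E j0" "E j0 / P j0 = \<theta>"
    and \<theta>: "power_above S P E \<theta> < x"
    and \<theta>_min: "\<forall>k\<in>S. 0 < E k \<longrightarrow> power_above S P E (E k / P k) < x \<longrightarrow> \<theta> \<le> E k / P k"
  shows "(\<Sum>i\<in>S. ggddf_allocation S P E x i) = min x (\<Sum>i\<in>{i\<in>S. E i > 0}. P i)"
proof -
  define A where "A = power_above S P E"
  define B where "B = power_at S P E"
  define lam where "lam = fill_fraction S P E \<theta> x"
  define tot where "tot = (\<Sum>i\<in>{i\<in>S. E i > 0}. P i)"
  have rates: "\<forall>i\<in>S. ggddf_allocation S P E x i = (if E i > 0 \<and> E i / P i > \<theta> then P i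
      else if E i > 0 \<and> E i / P i = \<theta> then lam * P i else 0)"
    using ggddf_allocation_threshold_form[OF Enn \<theta> \<theta>_min] unfolding lam_def .
  have B_pos: "0 < B \<theta>" unfolding B_def using power_at_pos[of j0 E] j0 by auto
  have \<theta>_pos: "0 < \<theta>" using j0 Ppos by auto
  define N1 where "N1 = {i\<in>S. E i > 0 \<and> E i / P i > \<theta>}"
  define N2 where "N2 = {i\<in>S. E i > 0 \<and> E i / P i = \<theta>}"
  define N3 where "N3 = {i\<in>S. E i > 0 \<and> E i / P i < \<theta>}"
  have AN1: "A \<theta> = sum P N1" unfolding A_def power_above_def N1_def by simp
  have BN2: "B \<theta> = sum P N2" unfolding B_def power_at_def N2_def by simp
  have sum_alloc: "(\<Sum>i\<in>S. ggddf_allocation S P E x i) = A \<theta> + lam * B \<theta>"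
  proof -
    have "(\<Sum>i\<in>S. ggddf_allocation S P E x i) = (\<Sum>i\<in>S. (if i \<in> N1 then P i else 0) + (if i \<in> N2 then lam * P i else 0))"
      using rates \<theta>_pos by (intro sum.cong) (auto simp: N1_def N2_def)
    also have "\<dots> = sum P N1 + lam * sum P N2"
      using fin by (simp add: sum.distrib sum.If_cases sum_distrib_left N1_def N2_def Int_def)
    finally show ?thesis using AN1 BN2 by simp
  qed
  have tot_split: "tot = A \<theta> + B \<theta> + sum P N3"
  proof -
    have "{i\<in>S. E i > 0} = N1 \<union> N2 \<union> N3" unfolding N1_def N2_def N3_def by auto
    then have "tot = sum P (N1 \<union> N2 \<union> N3)" unfolding tot_def by simp
    also have "\<dots> = sum P N1 + sum P N2 + sum P N3"
    proof -
      have f: "finite N1" "finite N2" "finite N3" using fin unfolding N1_def N2_def N3_def by auto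
      have "sum P (N1 \<union> N2 \<union> N3) = sum P (N1 \<union> N2) + sum P N3"
        using f by (intro sum.union_disjoint) (auto simp: N1_def N2_def N3_def)
      also have "sum P (N1 \<union> N2) = sum P N1 + sum P N2"
        using f by (intro sum.union_disjoint) (auto simp: N1_def N2_def N3_def)
      finally show ?thesis .
    qed
    finally show ?thesis using AN1 BN2 by simp
  qed
  have N3_nonneg: "0 \<le> sum P N3" using Ppos unfolding N3_def by (intro sum_nonneg) auto
  show ?thesis
    unfolding tot_def[symmetric]
  proof (cases "x \<le> A \<theta> + B \<theta>")
    case True
    have "lam = (x - A \<theta>) / B \<theta>"
      using True B_pos \<theta> unfolding lam_def fill_fraction_def A_def B_def by (auto simp: field_simps)
    then have "(\<Sum>i\<in>S. ggddf_allocation S P E x i) = x" using sum_alloc B_pos by simp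
    then show "(\<Sum>i\<in>S. ggddf_allocation S P E x i) = min x tot" using True tot_split N3_nonneg by simp
  next
    case False
    have "lam = 1" unfolding lam_def using B_pos False by (intro fill_fraction_eq_1) (auto simp: A_def B_def)
    txt \<open>No nonempty store is shorter than \<open>\<theta>\<close>: the longest such store would see only
      \<open>A \<theta> + B \<theta> < x\<close> above it, contradicting the minimality of \<open>\<theta>\<close>.\<close>
    have "N3 = {}"
    proof (rule ccontr)
      assume "N3 \<noteq> {}"
      have fin_N3: "finite N3" using fin unfolding N3_def by auto
      define M3 where "M3 = Max ((\<lambda>j. E j / P j) ` N3)"
      have "M3 \<in> (\<lambda>j. E j / P j) ` N3" unfolding M3_def using fin_N3 \<open>N3 \<noteq> {}\<close> by (intro Max_in) auto
      then obtain k where k: "k \<in> N3" "E k / P k = M3" by auto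
      have kmax: "\<forall>j\<in>N3. E j / P j \<le> M3" unfolding M3_def using fin_N3 by auto
      have "{j\<in>S. 0 < E j \<and> M3 < E j / P j} = N1 \<union> N2"
        using k kmax unfolding N1_def N2_def N3_def by force
      then have "A M3 = A \<theta> + B \<theta>" unfolding A_def power_above_def using AN1 BN2 fin
        by (simp add: A_def B_def, subst sum.union_disjoint) (auto simp: N1_def N2_def)
      then have "A (E k / P k) < x" using False k by simp
      then have "\<theta> \<le> E k / P k" using \<theta>_min k unfolding N3_def A_def by auto
      then show False using k unfolding N3_def by auto
    qed
    then show "(\<Sum>i\<in>S. ggddf_allocation S P E x i) = min x tot" using sum_alloc \<open>lam = 1\<close> False tot_split by simp
  qed
qed

lemma ggddf_rates_ggddf_allocation:
  assumes Enn: "\<forall>i\<in>S. 0 \<le> E i" and x: "0 \<le> x"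
  shows "ggddf_rates S P E x (ggddf_allocation S P E x)"
proof -
  define Ne where "Ne = {i\<in>S. E i > 0}"
  define tot where "tot = (\<Sum>i\<in>Ne. P i)"
  have fin_Ne: "finite Ne" using fin unfolding Ne_def by auto
  have tot_nonneg: "0 \<le> tot" unfolding tot_def Ne_def using Ppos by (intro sum_nonneg) auto
  have tot_eq_0: "tot = 0 \<longleftrightarrow> Ne = {}"
  proof
    assume "tot = 0"
    then have "\<forall>i\<in>Ne. P i = 0" unfolding tot_def
      using sum_nonneg_eq_0_iff[OF fin_Ne] Ppos unfolding Ne_def by (metis (mono_tags, lifting) mem_Collect_eq order_less_imp_le)
    then show "Ne = {}" using Ppos unfolding Ne_def by force
  qed (simp add: tot_def)
  show ?thesis
    unfolding ggddf_rates_def Let_def Ne_def[symmetric] tot_def[symmetric]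
  proof (intro conjI impI)
    assume "min x tot = 0"
    then have "x = 0 \<or> tot = 0" by (metis min_def)
    then have cases: "x = 0 \<or> Ne = {}" using tot_eq_0 by blast
    show "\<forall>i\<in>S. ggddf_allocation S P E x i = 0"
    proof
      fix i assume i: "i \<in> S"
      show "ggddf_allocation S P E x i = 0"
      proof (cases "E i > 0")
        case True
        then have "x = 0" using cases i unfolding Ne_def by auto
        then show ?thesis unfolding ggddf_allocation_def using fill_fraction_eq_0[of x] power_above_nonneg by simp
      next
        case False
        then have "E i = 0" using Enn i by force
        then show ?thesis unfolding ggddf_allocation_def using fill_fraction_zero_duration by simp
      qed
    qed
  next
    assume dbar: "min x tot \<noteq> 0"
    then have xpos: "0 < x" and Ne_nonempty: "Ne \<noteq> {}" using x tot_eq_0 tot_nonneg by (auto simp: min_def split: if_splits)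
    then obtain \<theta> where j0: "\<exists>j\<in>S. 0 < E j \<and> E j / P j = \<theta>" and \<theta>: "power_above S P E \<theta> < x"
      and \<theta>_min: "\<forall>k\<in>S. 0 < E k \<longrightarrow> power_above S P E (E k / P k) < x \<longrightarrow> \<theta> \<le> E k / P k"
      using ggddf_threshold_exists[OF xpos] unfolding Ne_def by blast
    then obtain j where j: "j \<in> S" "0 < E j" "E j / P j = \<theta>" by blast
    have "0 < (x - power_above S P E \<theta>) / power_at S P E \<theta>"
      using \<theta> power_at_pos[of j E] j by auto
    then have lam_pos: "0 < fill_fraction S P E \<theta> x" unfolding fill_fraction_def by auto
    show "\<exists>\<theta> lam. (\<exists>j\<in>S. 0 < E j \<and> E j / P j = \<theta>) \<and> 0 < lam \<and> lam \<le> 1 \<and>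
          (\<forall>i\<in>S. ggddf_allocation S P E x i = (if 0 < E i \<and> \<theta> < E i / P i then P i
                                   else if 0 < E i \<and> E i / P i = \<theta> then lam * P i else 0)) \<and>
          (\<Sum>i\<in>S. ggddf_allocation S P E x i) = min x tot"
      using j0 lam_pos fill_fraction_bounds ggddf_allocation_threshold_form[OF Enn \<theta> \<theta>_min]
        sum_ggddf_allocation[OF Enn j \<theta> \<theta>_min] unfolding Ne_def tot_def
      by (intro exI[of _ \<theta>] exI[of _ "fill_fraction S P E \<theta> x"]) auto
  qed
qed

end

lemma ggddf_rates_cong:
  assumes "\<forall>i\<in>S. E i = E' i" "\<forall>i\<in>S. \<rho> i = \<rho>' i"
  shows "ggddf_rates S P E x \<rho> = ggddf_rates S P E' x \<rho>'"
proof -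
  have "{i\<in>S. 0 < E i} = {i\<in>S. 0 < E' i}" "(\<Sum>i\<in>S. \<rho> i) = (\<Sum>i\<in>S. \<rho>' i)"
    using assms by auto
  then show ?thesis unfolding ggddf_rates_def Let_def using assms
    by (intro arg_cong2[where f="(\<and>)"] arg_cong2[where f="(\<longrightarrow>)"] refl ex_cong1 conj_cong
        ball_cong bex_cong) auto
qed

lemma ggddf_rates_sum:
  assumes rule: "ggddf_rates S P E x \<rho>"
  shows "(\<Sum>i\<in>S. \<rho> i) = min x (\<Sum>i\<in>{i\<in>S. 0 < E i}. P i)"
proof -
  define dbar where "dbar = min x (\<Sum>i\<in>{i\<in>S. 0 < E i}. P i)"
  show ?thesis
  proof (cases "dbar = 0")
    case True
    then have "\<forall>k\<in>S. \<rho> k = 0" using rule unfolding ggddf_rates_def Let_def dbar_def[symmetric] by blast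
    then show ?thesis using True unfolding dbar_def by simp
  next
    case False
    then show ?thesis using rule unfolding ggddf_rates_def Let_def dbar_def[symmetric] by blast
  qed
qed

lemma ggddf_rates_saturates_longer:
  assumes rule: "ggddf_rates S P E x \<rho>" and j: "j \<in> S" "\<rho> j \<noteq> 0"
    and i: "i \<in> S" "0 < E i" and longer: "E j / P j < E i / P i"
  shows "\<rho> i = P i"
proof -
  define dbar where "dbar = min x (\<Sum>i\<in>{i\<in>S. 0 < E i}. P i)"
  have "dbar \<noteq> 0"
  proof
    assume "dbar = 0"
    then have "\<forall>k\<in>S. \<rho> k = 0" using rule unfolding ggddf_rates_def Let_def dbar_def[symmetric] by blast
    then show False using j by blast
  qed
  then obtain \<theta> lam where \<rho>: "\<forall>k\<in>S. \<rho> k = (if 0 < E k \<and> \<theta> < E k / P k then P k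
      else if 0 < E k \<and> E k / P k = \<theta> then lam * P k else 0)"
    using rule unfolding ggddf_rates_def Let_def dbar_def[symmetric] by blast
  have "\<theta> \<le> E j / P j"
  proof (rule ccontr)
    assume "\<not> \<theta> \<le> E j / P j"
    then have "\<rho> j = 0" using \<rho> j(1) by simp
    then show False using j(2) by blast
  qed
  then have "\<theta> < E i / P i" using longer by linarith
  then show ?thesis using \<rho> i by simp
qed

section \<open>Existence of a GGDDF policy\<close>

lemma stored_energy_eq_integral:
  assumes "r i \<in> borel_measurable lborel" "\<forall>t\<ge>0. 0 \<le> r i t \<and> r i t \<le> c"
  shows "stored_energy E0 r i t = E0 i - integral {0..t} (r i)"
  unfolding stored_energy_def using assms
  by (subst set_lebesgue_integral_Icc_bounded[where C=c]) auto

text \<open>Every duration class is discharged at the GGDDF rate that its order at time \<open>t\<^sub>0\<close>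
  prescribes. A store of duration \<open>v\<close> at \<open>t\<^sub>0\<close> then has duration
  \<open>frozen_duration S P E D t\<^sub>0 t v\<close> at time \<open>t\<close>; as long as this map keeps the classes strictly
  ordered, the frozen rates are GGDDF rates.\<close>

definition frozen_fraction ::
  "'i set \<Rightarrow> ('i \<Rightarrow> real) \<Rightarrow> ('i \<Rightarrow> real) \<Rightarrow> (real \<Rightarrow> real) \<Rightarrow> real \<Rightarrow> real \<Rightarrow> real \<Rightarrow> real" where
  "frozen_fraction S P E D t\<^sub>0 v s = (if t\<^sub>0 \<le> s then fill_fraction S P E v (D s) else 0)"

definition frozen_duration ::
  "'i set \<Rightarrow> ('i \<Rightarrow> real) \<Rightarrow> ('i \<Rightarrow> real) \<Rightarrow> (real \<Rightarrow> real) \<Rightarrow> real \<Rightarrow> real \<Rightarrow> real \<Rightarrow> real" where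
  "frozen_duration S P E D t\<^sub>0 t v = v - integral {t\<^sub>0..t} (frozen_fraction S P E D t\<^sub>0 v)"

definition frozen_rate ::
  "'i set \<Rightarrow> ('i \<Rightarrow> real) \<Rightarrow> ('i \<Rightarrow> real) \<Rightarrow> (real \<Rightarrow> real) \<Rightarrow> real \<Rightarrow> 'i \<Rightarrow> real \<Rightarrow> real" where
  "frozen_rate S P E D t\<^sub>0 i s = P i * frozen_fraction S P E D t\<^sub>0 (E i / P i) s"

definition durations :: "'i set \<Rightarrow> ('i \<Rightarrow> real) \<Rightarrow> ('i \<Rightarrow> real) \<Rightarrow> real set" where
  "durations S P E = (\<lambda>i. E i / P i) ` S \<union> {0}"

lemma frozen_fraction_bounds: "0 \<le> frozen_fraction S P E D t\<^sub>0 v s" "frozen_fraction S P E D t\<^sub>0 v s \<le> 1"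
  unfolding frozen_fraction_def using fill_fraction_bounds[of S P E v "D s"] by auto

lemma abs_frozen_fraction_le: "\<bar>frozen_fraction S P E D t\<^sub>0 v s\<bar> \<le> 1"
  using frozen_fraction_bounds[of S P E D t\<^sub>0 v s] by simp

lemma frozen_duration_start: "frozen_duration S P E D t\<^sub>0 t\<^sub>0 v = v"
  unfolding frozen_duration_def by simp

lemma finite_durations: "finite S \<Longrightarrow> finite (durations S P E)"
  unfolding durations_def by simp

context
  fixes S :: "'i set" and P :: "'i \<Rightarrow> real" and D :: "real \<Rightarrow> real"
  assumes fin: "finite S" and Ppos: "\<forall>i\<in>S. 0 < P i" and Dm: "D \<in> borel_measurable lborel"
begin

lemma frozen_fraction_measurable: "frozen_fraction S P E D t\<^sub>0 v \<in> borel_measurable lborel"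
  unfolding frozen_fraction_def fill_fraction_def using Dm by measurable

lemma frozen_rate_measurable: "frozen_rate S P E D t\<^sub>0 i \<in> borel_measurable lborel"
  unfolding frozen_rate_def using frozen_fraction_measurable by measurable

lemma frozen_rate_bounds: "i \<in> S \<Longrightarrow> 0 \<le> frozen_rate S P E D t\<^sub>0 i s \<and> frozen_rate S P E D t\<^sub>0 i s \<le> P i"
  unfolding frozen_rate_def using frozen_fraction_bounds[of S P E D t\<^sub>0 "E i / P i" s] Ppos
  by (auto simp: mult_left_le)

lemma frozen_rate_energy:
  assumes "i \<in> S"
  shows "E i - integral {t\<^sub>0..t} (frozen_rate S P E D t\<^sub>0 i) = P i * frozen_duration S P E D t\<^sub>0 t (E i / P i)"
proof -
  have "P i \<noteq> 0" using Ppos assms by auto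
  then show ?thesis unfolding frozen_rate_def frozen_duration_def by (simp add: right_diff_distrib)
qed

lemma frozen_duration_zero: "frozen_duration S P E D t\<^sub>0 t 0 = 0"
proof -
  have "frozen_fraction S P E D t\<^sub>0 0 = (\<lambda>s. 0)"
    unfolding frozen_fraction_def using fill_fraction_zero_duration[OF fin Ppos] by auto
  then show ?thesis unfolding frozen_duration_def by simp
qed

lemma continuous_on_frozen_duration: "continuous_on {t\<^sub>0..b} (\<lambda>t. frozen_duration S P E D t\<^sub>0 t v)"
  unfolding frozen_duration_def
  by (intro continuous_intros indefinite_integral_continuous_1
      integrable_on_Icc_bounded[OF frozen_fraction_measurable abs_frozen_fraction_le])

lemma frozen_rates_ggddf:
  assumes Enn: "\<forall>i\<in>S. 0 \<le> E i" and Dnn: "0 \<le> D t" and t: "t\<^sub>0 \<le> t"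
    and order: "strict_mono_on (durations S P E) (frozen_duration S P E D t\<^sub>0 t)"
  shows "\<forall>i\<in>S. integral {t\<^sub>0..t} (frozen_rate S P E D t\<^sub>0 i) \<le> E i"
    and "ggddf_rates S P (\<lambda>i. E i - integral {t\<^sub>0..t} (frozen_rate S P E D t\<^sub>0 i)) (D t)
           (\<lambda>i. frozen_rate S P E D t\<^sub>0 i t)"
proof -
  define \<Phi> where "\<Phi> = frozen_duration S P E D t\<^sub>0 t"
  define C where "C = durations S P E"
  define E' where "E' = (\<lambda>i. E i - integral {t\<^sub>0..t} (frozen_rate S P E D t\<^sub>0 i))"
  have E': "E' i = P i * \<Phi> (E i / P i)" if "i \<in> S" for i
    unfolding E'_def \<Phi>_def using frozen_rate_energy[OF that] .
  have dur_in: "E i / P i \<in> C" if "i \<in> S" for i unfolding C_def durations_def using that by auto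
  have zero_in: "0 \<in> C" unfolding C_def durations_def by auto
  have less_iff: "\<Phi> v < \<Phi> w \<longleftrightarrow> v < w" if "v \<in> C" "w \<in> C" for v w
    using strict_mono_on_less[OF order] that unfolding \<Phi>_def C_def by blast
  have eq_iff: "\<Phi> v = \<Phi> w \<longleftrightarrow> v = w" if "v \<in> C" "w \<in> C" for v w
    using strict_mono_on_eqD[OF order, of v w] that unfolding \<Phi>_def C_def by auto
  have \<Phi>0: "\<Phi> 0 = 0" unfolding \<Phi>_def by (rule frozen_duration_zero)
  have P_pos: "0 < P i" if "i \<in> S" for i using Ppos that by auto
  have ratio: "E' i / P i = \<Phi> (E i / P i)" if "i \<in> S" for i
  proof -
    have "P i \<noteq> 0" using Ppos that by auto
    then show ?thesis using E'[OF that] by simp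
  qed
  have pos_iff: "0 < E' j \<longleftrightarrow> 0 < E j" if "j \<in> S" for j
  proof -
    have "0 < E' j \<longleftrightarrow> 0 < \<Phi> (E j / P j)"
      using E'[OF that] P_pos[OF that] by (simp add: zero_less_mult_iff)
    also have "\<dots> \<longleftrightarrow> 0 < E j / P j" using less_iff[OF zero_in dur_in[OF that]] \<Phi>0 by simp
    also have "\<dots> \<longleftrightarrow> 0 < E j" using P_pos[OF that] by (simp add: zero_less_divide_iff)
    finally show ?thesis .
  qed
  show "\<forall>i\<in>S. integral {t\<^sub>0..t} (frozen_rate S P E D t\<^sub>0 i) \<le> E i"
  proof
    fix i assume i: "i \<in> S"
    have "0 \<le> E i / P i" using Enn Ppos i by auto
    then have "0 \<le> \<Phi> (E i / P i)" using less_iff[OF zero_in dur_in[OF i]] \<Phi>0 by (cases "E i / P i = 0") auto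
    then have "0 \<le> E' i" using E'[OF i] P_pos[OF i] by simp
    then show "integral {t\<^sub>0..t} (frozen_rate S P E D t\<^sub>0 i) \<le> E i" unfolding E'_def by simp
  qed
  then have E'_nonneg: "\<forall>i\<in>S. 0 \<le> E' i" unfolding E'_def by simp
  txt \<open>At time \<open>t\<close> the classes are the images of the classes at \<open>t\<^sub>0\<close> under the
    order isomorphism \<open>\<Phi>\<close>, so the GGDDF allocation for \<open>E'\<close> is the frozen one.\<close>
  have "\<forall>i\<in>S. ggddf_allocation S P E' (D t) i = frozen_rate S P E D t\<^sub>0 i t"
  proof
    fix i assume i: "i \<in> S"
    show "ggddf_allocation S P E' (D t) i = frozen_rate S P E D t\<^sub>0 i t"
    proof -
      have "{j\<in>S. 0 < E' j \<and> E' i / P i < E' j / P j} = {j\<in>S. 0 < E j \<and> E i / P i < E j / P j}"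
        using pos_iff ratio less_iff dur_in i by auto
      moreover have "{j\<in>S. 0 < E' j \<and> E' j / P j = E' i / P i} = {j\<in>S. 0 < E j \<and> E j / P j = E i / P i}"
        using pos_iff ratio eq_iff dur_in i by auto
      ultimately show ?thesis
        unfolding ggddf_allocation_def frozen_rate_def frozen_fraction_def fill_fraction_def
          power_above_def power_at_def using t by simp
    qed
  qed
  then have "ggddf_rates S P E' (D t) (ggddf_allocation S P E' (D t))
      = ggddf_rates S P E' (D t) (\<lambda>i. frozen_rate S P E D t\<^sub>0 i t)"
    by (intro ggddf_rates_cong) auto
  moreover have "ggddf_rates S P E' (D t) (ggddf_allocation S P E' (D t))"
    using ggddf_rates_ggddf_allocation[OF fin Ppos E'_nonneg Dnn] .
  ultimately show "ggddf_rates S P (\<lambda>i. E i - integral {t\<^sub>0..t} (frozen_rate S P E D t\<^sub>0 i)) (D t)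
      (\<lambda>i. frozen_rate S P E D t\<^sub>0 i t)"
    unfolding E'_def by simp
qed

end

lemma first_meeting_time:
  fixes F :: "real \<Rightarrow> real \<Rightarrow> real"
  assumes "finite C" and cont: "\<And>v. v \<in> C \<Longrightarrow> continuous_on {t\<^sub>0..b} (\<lambda>t. F t v)"
    and start: "strict_mono_on C (F t\<^sub>0)" and "t\<^sub>0 \<le> b" and stop: "\<not> strict_mono_on C (F b)"
  shows "\<exists>t\<^sub>1\<ge>t\<^sub>0. (\<forall>t. t\<^sub>0 \<le> t \<and> t < t\<^sub>1 \<longrightarrow> strict_mono_on C (F t)) \<and>
    mono_on C (F t\<^sub>1) \<and> \<not> inj_on (F t\<^sub>1) C"
proof -
  define Pairs where "Pairs = {p \<in> C \<times> C. fst p < snd p}"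
  have "finite Pairs" unfolding Pairs_def using \<open>finite C\<close> by auto
  define K where "K = (\<Union>p\<in>Pairs. {t\<^sub>0..b} \<inter> (\<lambda>t. F t (snd p) - F t (fst p)) -` {..0})"
  have not_strict: "\<not> strict_mono_on C f \<longleftrightarrow> (\<exists>v\<in>C. \<exists>w\<in>C. v < w \<and> f w \<le> f v)" for f :: "real \<Rightarrow> real"
    unfolding strict_mono_on_def by (auto simp: not_less)
  have K_iff: "t \<in> K \<longleftrightarrow> t \<in> {t\<^sub>0..b} \<and> \<not> strict_mono_on C (F t)" for t
    unfolding not_strict K_def Pairs_def by auto
  have "closed K" unfolding K_def
  proof (intro closed_UN ballI \<open>finite Pairs\<close> continuous_closed_preimage)
    fix p assume "p \<in> Pairs"
    then show "continuous_on {t\<^sub>0..b} (\<lambda>t. F t (snd p) - F t (fst p))"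
      unfolding Pairs_def by (intro continuous_on_diff cont) auto
  qed auto
  moreover have "b \<in> K" using K_iff \<open>t\<^sub>0 \<le> b\<close> stop by simp
  moreover have K_bdd: "bdd_below K" unfolding K_def by (intro bdd_belowI[of _ t\<^sub>0]) auto
  ultimately have "Inf K \<in> K" using closed_contains_Inf by blast
  define t\<^sub>1 where "t\<^sub>1 = Inf K"
  have t\<^sub>1: "t\<^sub>0 \<le> t\<^sub>1" "t\<^sub>1 \<le> b" "\<not> strict_mono_on C (F t\<^sub>1)"
    using \<open>Inf K \<in> K\<close> unfolding K_iff t\<^sub>1_def by auto
  have before: "strict_mono_on C (F t)" if "t\<^sub>0 \<le> t" "t < t\<^sub>1" for t
  proof (rule ccontr)
    assume "\<not> strict_mono_on C (F t)"
    then have "t \<in> K" unfolding K_iff using that t\<^sub>1 by simp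
    then have "t\<^sub>1 \<le> t" unfolding t\<^sub>1_def using K_bdd by (rule cInf_lower)
    then show False using that by simp
  qed
  txt \<open>Crossing before \<open>t\<^sub>1\<close> would require meeting before \<open>t\<^sub>1\<close> (intermediate value theorem).\<close>
  have mono: "mono_on C (F t\<^sub>1)"
  proof (rule mono_onI, rule ccontr)
    fix v w assume vw: "v \<in> C" "w \<in> C" "v \<le> w" "\<not> F t\<^sub>1 v \<le> F t\<^sub>1 w"
    then have "v < w" by (cases "v = w") auto
    define g where "g t = F t v - F t w" for t
    have "g t\<^sub>0 \<le> 0" "0 \<le> g t\<^sub>1"
      using strict_mono_onD[OF start vw(1,2) \<open>v < w\<close>] vw(4) unfolding g_def by auto
    moreover have "continuous_on {t\<^sub>0..t\<^sub>1} g"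
      unfolding g_def using t\<^sub>1(2) vw(1,2) by (intro continuous_on_diff continuous_on_subset[OF cont]) auto
    ultimately obtain z where z: "t\<^sub>0 \<le> z" "z \<le> t\<^sub>1" "g z = 0"
      using IVT'[of g t\<^sub>0 0 t\<^sub>1] t\<^sub>1(1) by auto
    have "z \<noteq> t\<^sub>1" using z(3) vw(4) unfolding g_def by auto
    then have "strict_mono_on C (F z)" using before z by simp
    then show False using strict_mono_onD[of C "F z" v w] vw(1,2) \<open>v < w\<close> z(3) unfolding g_def by simp
  qed
  have "\<not> inj_on (F t\<^sub>1) C" using t\<^sub>1(3) mono mono_imp_strict_mono by blast
  with t\<^sub>1(1) before mono show ?thesis by blast
qed

definition is_ggddf_schedule ::
  "'i set \<Rightarrow> ('i \<Rightarrow> real) \<Rightarrow> (real \<Rightarrow> real) \<Rightarrow> real \<Rightarrow> ('i \<Rightarrow> real) \<Rightarrow> ('i \<Rightarrow> real \<Rightarrow> real) \<Rightarrow> bool" where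
  "is_ggddf_schedule S P D t\<^sub>0 E \<rho> \<longleftrightarrow>
     (\<forall>i\<in>S. \<rho> i \<in> borel_measurable lborel) \<and> (\<forall>i\<in>S. \<forall>t. 0 \<le> \<rho> i t \<and> \<rho> i t \<le> P i) \<and>
     (\<forall>t\<ge>t\<^sub>0. (\<Sum>i\<in>S. \<rho> i t) \<le> D t) \<and> (\<forall>i\<in>S. \<forall>t\<ge>t\<^sub>0. integral {t\<^sub>0..t} (\<rho> i) \<le> E i) \<and>
     (AE t in lborel. t\<^sub>0 \<le> t \<longrightarrow> ggddf_rates S P (\<lambda>i. E i - integral {t\<^sub>0..t} (\<rho> i)) (D t) (\<lambda>i. \<rho> i t))"

lemma ggddf_rates_sum_le:
  assumes "ggddf_rates S P E x \<rho>"
  shows "(\<Sum>i\<in>S. \<rho> i) \<le> x"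
  using ggddf_rates_sum[OF assms] by simp

lemma is_ggddf_scheduleI:
  assumes meas: "\<forall>i\<in>S. \<psi> i \<in> borel_measurable lborel" and bounds: "\<forall>i\<in>S. \<forall>t. 0 \<le> \<psi> i t \<and> \<psi> i t \<le> P i"
    and ggddf: "\<And>t. t\<^sub>0 \<le> t \<Longrightarrow> (\<forall>i\<in>S. integral {t\<^sub>0..t} (\<psi> i) \<le> E i) \<and>
        ggddf_rates S P (\<lambda>i. E i - integral {t\<^sub>0..t} (\<psi> i)) (D t) (\<lambda>i. \<psi> i t)"
  shows "is_ggddf_schedule S P D t\<^sub>0 E \<psi>"
  unfolding is_ggddf_schedule_def
proof (intro conjI)
  show "\<forall>t\<ge>t\<^sub>0. (\<Sum>i\<in>S. \<psi> i t) \<le> D t"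
    using ggddf ggddf_rates_sum_le by blast
  show "\<forall>i\<in>S. \<forall>t\<ge>t\<^sub>0. integral {t\<^sub>0..t} (\<psi> i) \<le> E i"
    using ggddf by blast
  show "AE t in lborel. t\<^sub>0 \<le> t \<longrightarrow> ggddf_rates S P (\<lambda>i. E i - integral {t\<^sub>0..t} (\<psi> i)) (D t) (\<lambda>i. \<psi> i t)"
    using ggddf by (intro AE_I2) blast
qed (fact meas bounds)+

lemma is_ggddf_schedule_append:
  assumes meas: "\<forall>i\<in>S. \<psi> i \<in> borel_measurable lborel" and bounds: "\<forall>i\<in>S. \<forall>t. 0 \<le> \<psi> i t \<and> \<psi> i t \<le> P i"
    and ggddf: "\<And>t. t\<^sub>0 \<le> t \<Longrightarrow> t < t\<^sub>1 \<Longrightarrow> (\<forall>i\<in>S. integral {t\<^sub>0..t} (\<psi> i) \<le> E i) \<and>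
        ggddf_rates S P (\<lambda>i. E i - integral {t\<^sub>0..t} (\<psi> i)) (D t) (\<lambda>i. \<psi> i t)"
    and t\<^sub>1: "t\<^sub>0 \<le> t\<^sub>1" and rest: "is_ggddf_schedule S P D t\<^sub>1 (\<lambda>i. E i - integral {t\<^sub>0..t\<^sub>1} (\<psi> i)) \<rho>"
  shows "is_ggddf_schedule S P D t\<^sub>0 E (\<lambda>i t. if t < t\<^sub>1 then \<psi> i t else \<rho> i t)"
proof -
  define \<sigma> where "\<sigma> i t = (if t < t\<^sub>1 then \<psi> i t else \<rho> i t)" for i t
  have \<rho>_meas: "\<forall>i\<in>S. \<rho> i \<in> borel_measurable lborel" and \<rho>_bounds: "\<forall>i\<in>S. \<forall>t. 0 \<le> \<rho> i t \<and> \<rho> i t \<le> P i"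
    using rest unfolding is_ggddf_schedule_def by auto
  have \<sigma>_meas: "\<forall>i\<in>S. \<sigma> i \<in> borel_measurable lborel"
  proof
    fix i assume "i \<in> S"
    then have [measurable]: "\<psi> i \<in> borel_measurable lborel" "\<rho> i \<in> borel_measurable lborel"
      using meas \<rho>_meas by auto
    show "\<sigma> i \<in> borel_measurable lborel" unfolding \<sigma>_def by measurable
  qed
  have \<sigma>_bounds: "\<forall>i\<in>S. \<forall>t. 0 \<le> \<sigma> i t \<and> \<sigma> i t \<le> P i"
    unfolding \<sigma>_def using bounds \<rho>_bounds by auto
  have before: "integral {t\<^sub>0..t} (\<sigma> i) = integral {t\<^sub>0..t} (\<psi> i)" if "t \<le> t\<^sub>1" for i t
    by (rule integral_spike[of "{t\<^sub>1}"]) (use that in \<open>auto simp: \<sigma>_def\<close>)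
  have after: "E i - integral {t\<^sub>0..t} (\<sigma> i) = (E i - integral {t\<^sub>0..t\<^sub>1} (\<psi> i)) - integral {t\<^sub>1..t} (\<rho> i)"
    if "i \<in> S" "t\<^sub>1 \<le> t" for i t
  proof -
    have "\<sigma> i integrable_on {t\<^sub>0..t}"
      using \<sigma>_meas \<sigma>_bounds that by (intro integrable_on_Icc_bounded[where C="P i"]) (auto simp: abs_le_iff)
    then have "integral {t\<^sub>0..t} (\<sigma> i) = integral {t\<^sub>0..t\<^sub>1} (\<sigma> i) + integral {t\<^sub>1..t} (\<sigma> i)"
      using t\<^sub>1 that by (simp add: Henstock_Kurzweil_Integration.integral_combine)
    also have "integral {t\<^sub>1..t} (\<sigma> i) = integral {t\<^sub>1..t} (\<rho> i)"
      by (rule integral_cong) (auto simp: \<sigma>_def)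
    finally show ?thesis using before[of t\<^sub>1 i] by simp
  qed
  have ggddf_\<sigma>: "ggddf_rates S P (\<lambda>i. E i - integral {t\<^sub>0..t} (\<sigma> i)) (D t) (\<lambda>i. \<sigma> i t)"
    if "t\<^sub>0 \<le> t" "t\<^sub>1 \<le> t \<longrightarrow> ggddf_rates S P (\<lambda>i. (E i - integral {t\<^sub>0..t\<^sub>1} (\<psi> i)) - integral {t\<^sub>1..t} (\<rho> i))
        (D t) (\<lambda>i. \<rho> i t)" for t
  proof (cases "t < t\<^sub>1")
    case True
    have "\<forall>i\<in>S. E i - integral {t\<^sub>0..t} (\<sigma> i) = E i - integral {t\<^sub>0..t} (\<psi> i)"
      using before[of t] True by simp
    moreover have "\<forall>i\<in>S. \<sigma> i t = \<psi> i t" using True by (simp add: \<sigma>_def)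
    ultimately show ?thesis
      using ggddf[OF that(1) True] ggddf_rates_cong[of S "\<lambda>i. E i - integral {t\<^sub>0..t} (\<sigma> i)"
          "\<lambda>i. E i - integral {t\<^sub>0..t} (\<psi> i)" "\<lambda>i. \<sigma> i t" "\<lambda>i. \<psi> i t" P "D t"] by simp
  next
    case False
    have "\<forall>i\<in>S. E i - integral {t\<^sub>0..t} (\<sigma> i) = (E i - integral {t\<^sub>0..t\<^sub>1} (\<psi> i)) - integral {t\<^sub>1..t} (\<rho> i)"
      using after False by simp
    moreover have "\<forall>i\<in>S. \<sigma> i t = \<rho> i t" using False by (simp add: \<sigma>_def)
    ultimately show ?thesis
      using that(2) False ggddf_rates_cong[of S "\<lambda>i. E i - integral {t\<^sub>0..t} (\<sigma> i)"
          "\<lambda>i. (E i - integral {t\<^sub>0..t\<^sub>1} (\<psi> i)) - integral {t\<^sub>1..t} (\<rho> i)" "\<lambda>i. \<sigma> i t" "\<lambda>i. \<rho> i t" P "D t"]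
      by simp
  qed
  have sum_le: "(\<Sum>i\<in>S. \<sigma> i t) \<le> D t" if t: "t\<^sub>0 \<le> t" for t
  proof (cases "t < t\<^sub>1")
    case True
    have "(\<Sum>i\<in>S. \<psi> i t) \<le> D t" using ggddf[OF t True] ggddf_rates_sum_le by blast
    then show ?thesis using True unfolding \<sigma>_def by simp
  next
    case False
    then have "(\<Sum>i\<in>S. \<rho> i t) \<le> D t" using rest unfolding is_ggddf_schedule_def by simp
    then show ?thesis using False unfolding \<sigma>_def by simp
  qed
  have integral_le: "integral {t\<^sub>0..t} (\<sigma> i) \<le> E i" if i: "i \<in> S" and t: "t\<^sub>0 \<le> t" for i t
  proof (cases "t < t\<^sub>1")
    case True
    then show ?thesis using ggddf[OF t True] before[of t i] i by simp
  next
    case False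
    then have "integral {t\<^sub>1..t} (\<rho> i) \<le> E i - integral {t\<^sub>0..t\<^sub>1} (\<psi> i)"
      using rest i unfolding is_ggddf_schedule_def by simp
    then show ?thesis using after[OF i, of t] False by linarith
  qed
  have "AE t in lborel. t\<^sub>1 \<le> t \<longrightarrow> ggddf_rates S P (\<lambda>i. (E i - integral {t\<^sub>0..t\<^sub>1} (\<psi> i)) - integral {t\<^sub>1..t} (\<rho> i))
      (D t) (\<lambda>i. \<rho> i t)"
    using rest unfolding is_ggddf_schedule_def by blast
  then have ae: "AE t in lborel. t\<^sub>0 \<le> t \<longrightarrow>
      ggddf_rates S P (\<lambda>i. E i - integral {t\<^sub>0..t} (\<sigma> i)) (D t) (\<lambda>i. \<sigma> i t)"
  proof eventually_elim
    case (elim t)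
    then show ?case using ggddf_\<sigma>[of t] by blast
  qed
  have "is_ggddf_schedule S P D t\<^sub>0 E \<sigma>"
    unfolding is_ggddf_schedule_def
  proof (intro conjI)
    show "\<forall>t\<ge>t\<^sub>0. (\<Sum>i\<in>S. \<sigma> i t) \<le> D t" using sum_le by blast
    show "\<forall>i\<in>S. \<forall>t\<ge>t\<^sub>0. integral {t\<^sub>0..t} (\<sigma> i) \<le> E i" using integral_le by blast
  qed (fact \<sigma>_meas \<sigma>_bounds ae)+
  then show ?thesis unfolding \<sigma>_def .
qed

context
  fixes S :: "'i set" and P :: "'i \<Rightarrow> real" and D :: "real \<Rightarrow> real"
  assumes fin: "finite S" and Ppos: "\<forall>i\<in>S. 0 < P i"
    and Dm: "D \<in> borel_measurable lborel" and Dnn: "\<forall>t. 0 \<le> D t"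
begin

text \<open>Run the frozen rates until two duration classes meet, then restart: the number of
  distinct durations drops at every restart.\<close>
lemma ggddf_schedule_exists:
  assumes "\<forall>i\<in>S. 0 \<le> E i"
  shows "\<exists>\<rho>. is_ggddf_schedule S P D t\<^sub>0 E \<rho>"
  using assms
proof (induction "card (durations S P E)" arbitrary: t\<^sub>0 E rule: less_induct)
  case less
  note Enn = less.prems
  define C where "C = durations S P E"
  define F where "F = frozen_duration S P E D t\<^sub>0"
  define \<psi> where "\<psi> = frozen_rate S P E D t\<^sub>0"
  have \<psi>_meas: "\<forall>i\<in>S. \<psi> i \<in> borel_measurable lborel"
    unfolding \<psi>_def using frozen_rate_measurable[OF fin Ppos Dm] by blast
  have \<psi>_bounds: "\<forall>i\<in>S. \<forall>t. 0 \<le> \<psi> i t \<and> \<psi> i t \<le> P i"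
    unfolding \<psi>_def using frozen_rate_bounds[OF fin Ppos Dm] by blast
  have ggddf: "(\<forall>i\<in>S. integral {t\<^sub>0..t} (\<psi> i) \<le> E i) \<and>
      ggddf_rates S P (\<lambda>i. E i - integral {t\<^sub>0..t} (\<psi> i)) (D t) (\<lambda>i. \<psi> i t)"
    if "t\<^sub>0 \<le> t" "strict_mono_on C (F t)" for t
    using frozen_rates_ggddf[OF fin Ppos Dm Enn spec[OF Dnn] that(1) that(2)[unfolded C_def F_def]]
    unfolding \<psi>_def by blast
  show ?case
  proof (cases "\<forall>t\<ge>t\<^sub>0. strict_mono_on C (F t)")
    case True
    have "is_ggddf_schedule S P D t\<^sub>0 E \<psi>"
      by (rule is_ggddf_scheduleI[OF \<psi>_meas \<psi>_bounds]) (use ggddf True in blast)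
    then show ?thesis by blast
  next
    case False
    then obtain b where b: "t\<^sub>0 \<le> b" "\<not> strict_mono_on C (F b)" by auto
    have finC: "finite C" unfolding C_def by (rule finite_durations[OF fin])
    have "F t\<^sub>0 = (\<lambda>v. v)" unfolding F_def by (intro ext frozen_duration_start)
    then have "strict_mono_on C (F t\<^sub>0)" by (simp add: strict_mono_on_ident)
    then have "\<exists>t\<^sub>1\<ge>t\<^sub>0. (\<forall>t. t\<^sub>0 \<le> t \<and> t < t\<^sub>1 \<longrightarrow> strict_mono_on C (F t)) \<and>
        mono_on C (F t\<^sub>1) \<and> \<not> inj_on (F t\<^sub>1) C"
      using finC continuous_on_frozen_duration[OF fin Ppos Dm] b
      by (intro first_meeting_time[of C t\<^sub>0 b F]) (simp_all add: F_def)
    then obtain t\<^sub>1 where t\<^sub>1: "t\<^sub>0 \<le> t\<^sub>1" "\<And>t. t\<^sub>0 \<le> t \<Longrightarrow> t < t\<^sub>1 \<Longrightarrow> strict_mono_on C (F t)"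
      and mono: "mono_on C (F t\<^sub>1)" and not_inj: "\<not> inj_on (F t\<^sub>1) C"
      by blast
    define E\<^sub>1 where "E\<^sub>1 = (\<lambda>i. E i - integral {t\<^sub>0..t\<^sub>1} (\<psi> i))"
    have E\<^sub>1: "E\<^sub>1 i = P i * F t\<^sub>1 (E i / P i)" if "i \<in> S" for i
      unfolding E\<^sub>1_def \<psi>_def F_def using frozen_rate_energy[OF fin Ppos Dm that] by simp
    have F_nonneg: "0 \<le> F t\<^sub>1 v" if "v \<in> C" for v
    proof -
      have "0 \<in> C" "0 \<le> v" using that Enn Ppos unfolding C_def durations_def by auto
      then have "F t\<^sub>1 0 \<le> F t\<^sub>1 v" using mono_onD[OF mono _ that] by blast
      then show ?thesis unfolding F_def using frozen_duration_zero[OF fin Ppos Dm] by simp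
    qed
    have E\<^sub>1_nonneg: "\<forall>i\<in>S. 0 \<le> E\<^sub>1 i"
    proof
      fix i assume i: "i \<in> S"
      have "E i / P i \<in> C" using i unfolding C_def durations_def by auto
      moreover have "0 \<le> P i" using Ppos i by auto
      ultimately show "0 \<le> E\<^sub>1 i" using E\<^sub>1[OF i] F_nonneg[of "E i / P i"] by simp
    qed
    have "(\<lambda>i. E\<^sub>1 i / P i) ` S = (\<lambda>i. F t\<^sub>1 (E i / P i)) ` S"
      using E\<^sub>1 Ppos by (intro image_cong) auto
    moreover have "F t\<^sub>1 0 = 0" unfolding F_def by (rule frozen_duration_zero[OF fin Ppos Dm])
    ultimately have "durations S P E\<^sub>1 = F t\<^sub>1 ` C"
      unfolding durations_def C_def by (simp add: image_Un image_image)
    moreover have "card (F t\<^sub>1 ` C) \<noteq> card C" using inj_on_iff_eq_card[OF finC, of "F t\<^sub>1"] not_inj by simp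
    ultimately have "card (durations S P E\<^sub>1) < card C"
      using card_image_le[OF finC, of "F t\<^sub>1"] by simp
    then obtain \<rho> where \<rho>: "is_ggddf_schedule S P D t\<^sub>1 E\<^sub>1 \<rho>"
      using less.hyps E\<^sub>1_nonneg unfolding C_def by blast
    have prefix: "(\<forall>i\<in>S. integral {t\<^sub>0..t} (\<psi> i) \<le> E i) \<and>
        ggddf_rates S P (\<lambda>i. E i - integral {t\<^sub>0..t} (\<psi> i)) (D t) (\<lambda>i. \<psi> i t)"
      if "t\<^sub>0 \<le> t" "t < t\<^sub>1" for t
      using ggddf[OF that(1) t\<^sub>1(2)[OF that]] .
    show ?thesis
      using is_ggddf_schedule_append[OF \<psi>_meas \<psi>_bounds prefix t\<^sub>1(1) \<rho>[unfolded E\<^sub>1_def]] by blast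
  qed
qed

end

lemma ggddf_policy_exists:
  assumes fin: "finite S" and Ppos: "\<forall>i\<in>S. 0 < P i" and E0: "\<forall>i\<in>S. 0 \<le> E0 i \<and> E0 i \<le> Ebar i"
    and dnn: "\<forall>t\<ge>0. 0 \<le> d t" and dint: "\<forall>a\<ge>0. set_integrable lborel {0..a} d"
  shows "\<exists>r. is_ggddf_policy S Ebar P E0 d r"
proof -
  define D where "D t = (if 0 \<le> t then d t else 0)" for t
  have Dm: "D \<in> borel_measurable lborel"
    unfolding D_def using borel_measurable_locally_integrable_on_nonneg[OF dint] .
  have Dnn: "\<forall>t. 0 \<le> D t" unfolding D_def using dnn by auto
  obtain \<rho> where \<rho>: "is_ggddf_schedule S P D 0 E0 \<rho>"
    using ggddf_schedule_exists[OF fin Ppos Dm Dnn] E0 by blast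
  have \<rho>_meas: "\<forall>i\<in>S. \<rho> i \<in> borel_measurable lborel" and \<rho>_bounds: "\<forall>i\<in>S. \<forall>t. 0 \<le> \<rho> i t \<and> \<rho> i t \<le> P i"
    using \<rho> unfolding is_ggddf_schedule_def by auto
  have energy: "stored_energy E0 \<rho> i t = E0 i - integral {0..t} (\<rho> i)" if "i \<in> S" for i t
    using \<rho>_meas \<rho>_bounds that by (intro stored_energy_eq_integral[where c="P i"]) auto
  have integral_nonneg: "0 \<le> integral {0..t} (\<rho> i)" if "i \<in> S" for i t
    using \<rho>_meas \<rho>_bounds that
    by (intro integral_nonneg integrable_on_Icc_bounded[where C="P i"]) (auto simp: abs_le_iff)
  have "is_policy S Ebar P E0 d \<rho>"
    unfolding is_policy_def
  proof (intro conjI ballI allI impI)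
    fix i and t :: real assume i: "i \<in> S" and t: "0 \<le> t"
    show "0 \<le> stored_energy E0 \<rho> i t" using \<rho> i t energy[OF i] unfolding is_ggddf_schedule_def by auto
    show "stored_energy E0 \<rho> i t \<le> Ebar i" using energy[OF i] integral_nonneg[OF i, of t] E0 i by auto
  next
    fix t :: real assume "0 \<le> t"
    then show "(\<Sum>i\<in>S. \<rho> i t) \<le> d t" using \<rho> unfolding is_ggddf_schedule_def D_def by auto
  qed (use \<rho>_meas \<rho>_bounds in auto)
  moreover have "AE t in lborel. 0 \<le> t \<longrightarrow>
      ggddf_rates S P (\<lambda>i. E0 i - integral {0..t} (\<rho> i)) (D t) (\<lambda>i. \<rho> i t)"
    using \<rho> unfolding is_ggddf_schedule_def by blast
  then have "AE t in lborel. 0 \<le> t \<longrightarrow>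
      ggddf_rates S P (\<lambda>i. stored_energy E0 \<rho> i t) (d t) (\<lambda>i. \<rho> i t)"
  proof eventually_elim
    case (elim t)
    show ?case
    proof
      assume "0 \<le> t"
      then show "ggddf_rates S P (\<lambda>i. stored_energy E0 \<rho> i t) (d t) (\<lambda>i. \<rho> i t)"
        using elim energy ggddf_rates_cong[of S "\<lambda>i. stored_energy E0 \<rho> i t"
            "\<lambda>i. E0 i - integral {0..t} (\<rho> i)" "\<lambda>i. \<rho> i t" "\<lambda>i. \<rho> i t" P "d t"]
        unfolding D_def by simp
    qed
  qed
  ultimately show ?thesis unfolding is_ggddf_policy_def by blast
qed

section \<open>Energy bounds valid for every policy\<close>

lemma burst_power_eq_sum_indicator:
  assumes "finite S"
  shows "burst_power S P E u = (\<Sum>i\<in>S. P i * indicator {..E i / P i} u)"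
  unfolding burst_power_def using assms
  by (simp add: sum.inter_filter[symmetric] indicator_def of_bool_def if_distrib[of "\<lambda>x. P _ * x"]
      sum.If_cases Int_def)

lemma borel_measurable_burst_power:
  assumes "finite S"
  shows "burst_power S P E \<in> borel_measurable lborel"
  unfolding burst_power_eq_sum_indicator[OF assms, abs_def] by measurable

lemma nn_integral_sum_bars:
  assumes "finite J" and "\<forall>j\<in>J. 0 < P j \<and> 0 \<le> E j"
  shows "(\<integral>\<^sup>+u. (\<Sum>j\<in>J. ennreal (P j) * indicator {0..E j / P j} u) \<partial>lborel) = (\<Sum>j\<in>J. ennreal (E j))"
proof -
  have "(\<integral>\<^sup>+u. (\<Sum>j\<in>J. ennreal (P j) * indicator {0..E j / P j} u) \<partial>lborel)
      = (\<Sum>j\<in>J. ennreal (P j) * emeasure lborel {0..E j / P j})"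
    by (subst nn_integral_sum) (auto simp: nn_integral_cmult_indicator)
  also have "\<dots> = (\<Sum>j\<in>J. ennreal (E j))"
  proof (intro sum.cong refl)
    fix j assume j: "j \<in> J"
    have pj: "0 < P j" and tj: "0 \<le> E j / P j" using assms(2) j by auto
    have "ennreal (P j) * ennreal (E j / P j) = ennreal (P j * (E j / P j))"
      using pj tj by (simp only: ennreal_mult less_imp_le)
    also have "P j * (E j / P j) = E j" using pj by simp
    finally show "ennreal (P j) * emeasure lborel {0..E j / P j} = ennreal (E j)"
      using tj by (simp only: emeasure_lborel_Icc diff_zero)
  qed
  finally show ?thesis .
qed

lemma ep_stores_le_total_energy:
  assumes fin: "finite S" and Ppos: "\<forall>i\<in>S. 0 < P i" and Enn: "\<forall>i\<in>S. 0 \<le> E i" and p: "0 \<le> p"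
  shows "ep_stores S P E p \<le> ennreal (\<Sum>i\<in>S. E i)"
proof -
  have "ep_stores S P E p \<le> (\<integral>\<^sup>+u. (\<Sum>i\<in>S. ennreal (P i) * indicator {0..E i / P i} u) \<partial>lborel)"
    unfolding ep_stores_def
  proof (intro nn_integral_mono)
    fix u :: real
    show "indicator {0..} u * ennreal (max 0 (burst_power S P E u - p))
        \<le> (\<Sum>i\<in>S. ennreal (P i) * indicator {0..E i / P i} u)"
    proof (cases "0 \<le> u")
      case True
      have "0 \<le> burst_power S P E u" unfolding burst_power_def using Ppos by (intro sum_nonneg) auto
      then have "ennreal (max 0 (burst_power S P E u - p)) \<le> ennreal (burst_power S P E u)"
        using p by (intro ennreal_leI) auto
      also have "\<dots> = (\<Sum>i\<in>S. ennreal (P i * indicator {..E i / P i} u))"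
        unfolding burst_power_eq_sum_indicator[OF fin] using Ppos
        by (subst sum_ennreal) (auto intro!: mult_nonneg_nonneg)
      also have "\<dots> = (\<Sum>i\<in>S. ennreal (P i) * indicator {0..E i / P i} u)"
        using True by (intro sum.cong refl) (auto simp: indicator_def)
      finally show ?thesis using True by simp
    qed simp
  qed
  also have "\<dots> = (\<Sum>i\<in>S. ennreal (E i))" using fin Ppos Enn by (intro nn_integral_sum_bars) auto
  also have "\<dots> = ennreal (\<Sum>i\<in>S. E i)" using Enn by (intro sum_ennreal) auto
  finally show ?thesis .
qed

lemma sum_min_energy_le_ep_stores:
  assumes fin: "finite S" and Ppos: "\<forall>i\<in>S. 0 < P i" and Enn: "\<forall>i\<in>S. 0 \<le> E i"
    and L: "0 \<le> L" and p: "0 \<le> p"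
  shows "(\<Sum>i\<in>S. ennreal (min (E i) (P i * L))) \<le> ep_stores S P E p + ennreal (p * L)"
proof -
  define s where "s = burst_power S P E"
  have sm: "s \<in> borel_measurable lborel" unfolding s_def by (rule borel_measurable_burst_power[OF fin])
  have "(\<integral>\<^sup>+u. indicator {0..L} u * ennreal (s u) \<partial>lborel)
      = (\<integral>\<^sup>+u. (\<Sum>i\<in>S. ennreal (P i) * indicator ({0..L} \<inter> {..E i / P i}) u) \<partial>lborel)"
  proof (intro nn_integral_cong)
    fix u :: real
    have "indicator {0..L} u * ennreal (s u) = indicator {0..L} u * (\<Sum>i\<in>S. ennreal (P i * indicator {..E i / P i} u))"
      unfolding s_def burst_power_eq_sum_indicator[OF fin] using Ppos by (subst sum_ennreal) (auto intro!: mult_nonneg_nonneg)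
    also have "\<dots> = (\<Sum>i\<in>S. ennreal (P i) * indicator ({0..L} \<inter> {..E i / P i}) u)"
      unfolding sum_distrib_left using Ppos
      by (intro sum.cong refl) (auto simp: indicator_def ennreal_mult)
    finally show "indicator {0..L} u * ennreal (s u) = (\<Sum>i\<in>S. ennreal (P i) * indicator ({0..L} \<inter> {..E i / P i}) u)" .
  qed
  also have "\<dots> = (\<Sum>i\<in>S. ennreal (P i) * emeasure lborel ({0..L} \<inter> {..E i / P i}))"
    by (subst nn_integral_sum) (auto simp: nn_integral_cmult_indicator)
  also have "\<dots> = (\<Sum>i\<in>S. ennreal (min (E i) (P i * L)))"
  proof (intro sum.cong refl)
    fix i assume i: "i \<in> S"
    have pi: "0 < P i" using Ppos i by auto
    have tau: "0 \<le> E i / P i" using Enn i pi by auto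
    have "{0..L} \<inter> {..E i / P i} = {0..min L (E i / P i)}" by auto
    then have "emeasure lborel ({0..L} \<inter> {..E i / P i}) = ennreal (min L (E i / P i))"
      using L tau by simp
    moreover have "P i * min L (E i / P i) = min (E i) (P i * L)"
      using pi by (simp add: min_def field_simps)
    ultimately show "ennreal (P i) * emeasure lborel ({0..L} \<inter> {..E i / P i}) = ennreal (min (E i) (P i * L))"
      using pi tau L by (metis ennreal_mult less_imp_le min.boundedI)
  qed
  finally have eq1: "(\<Sum>i\<in>S. ennreal (min (E i) (P i * L))) = (\<integral>\<^sup>+u. indicator {0..L} u * ennreal (s u) \<partial>lborel)" ..
  also have "\<dots> \<le> (\<integral>\<^sup>+u. indicator {0..L} u * ennreal (max 0 (s u - p)) + ennreal p * indicator {0..L} u \<partial>lborel)"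
  proof (intro nn_integral_mono)
    fix u
    have "ennreal (s u) \<le> ennreal (max 0 (s u - p) + p)" by (intro ennreal_leI) auto
    also have "\<dots> = ennreal (max 0 (s u - p)) + ennreal p" using p by (intro ennreal_plus) auto
    finally show "indicator {0..L} u * ennreal (s u) \<le> indicator {0..L} u * ennreal (max 0 (s u - p)) + ennreal p * indicator {0..L} u"
      by (auto simp: indicator_def)
  qed
  also have "\<dots> = (\<integral>\<^sup>+u. indicator {0..L} u * ennreal (max 0 (s u - p)) \<partial>lborel) + ennreal p * emeasure lborel {0..L}"
    using sm by (subst nn_integral_add) (auto simp: nn_integral_cmult_indicator)
  also have "\<dots> \<le> ep_stores S P E p + ennreal (p * L)"
  proof (intro add_mono)
    show "(\<integral>\<^sup>+u. indicator {0..L} u * ennreal (max 0 (s u - p)) \<partial>lborel) \<le> ep_stores S P E p"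
      unfolding ep_stores_def s_def by (intro nn_integral_mono) (auto simp: indicator_def)
    show "ennreal p * emeasure lborel {0..L} \<le> ennreal (p * L)" using L p by (simp add: ennreal_mult)
  qed
  finally show ?thesis .
qed


context
  fixes S :: "'i set" and Ebar P E0 :: "'i \<Rightarrow> real" and d :: "real \<Rightarrow> real" and r :: "'i \<Rightarrow> real \<Rightarrow> real"
  assumes fin: "finite S" and Ppos: "\<forall>i\<in>S. 0 < P i" and pol: "is_policy S Ebar P E0 d r"
begin

lemma policy_rate_measurable: "i \<in> S \<Longrightarrow> r i \<in> borel_measurable lborel"
  using pol unfolding is_policy_def by auto

lemma policy_rate_bounds: "i \<in> S \<Longrightarrow> 0 \<le> t \<Longrightarrow> 0 \<le> r i t \<and> r i t \<le> P i"
  using pol unfolding is_policy_def by auto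

lemma policy_sum_measurable: "(\<lambda>t. \<Sum>i\<in>S. r i t) \<in> borel_measurable lborel"
  using policy_rate_measurable by (intro borel_measurable_sum) auto

lemma policy_rate_integrable_on:
  assumes "i \<in> S" "0 \<le> a"
  shows "r i integrable_on {a..b}"
  using assms policy_rate_bounds[OF assms(1)]
  by (intro integrable_on_Icc_bounded[OF policy_rate_measurable, where C="P i"]) auto

lemma policy_stored_energy_eq: "i \<in> S \<Longrightarrow> stored_energy E0 r i t = E0 i - integral {0..t} (r i)"
  using policy_rate_measurable policy_rate_bounds by (intro stored_energy_eq_integral[where c="P i"]) auto

lemma policy_E0_nonneg: "\<forall>i\<in>S. 0 \<le> E0 i"
  using pol policy_stored_energy_eq[of _ 0] unfolding is_policy_def by force

lemma policy_integral_le: "i \<in> S \<Longrightarrow> 0 \<le> t \<Longrightarrow> integral {0..t} (r i) \<le> E0 i"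
  using pol policy_stored_energy_eq unfolding is_policy_def by force

lemma policy_stored_energy_split:
  assumes "i \<in> S" "0 \<le> c" "c \<le> t"
  shows "stored_energy E0 r i t = stored_energy E0 r i c - integral {c..t} (r i)"
proof -
  have "integral {0..c} (r i) + integral {c..t} (r i) = integral {0..t} (r i)"
    using assms by (intro Henstock_Kurzweil_Integration.integral_combine policy_rate_integrable_on) auto
  then show ?thesis using policy_stored_energy_eq[OF assms(1)] by simp
qed

lemma policy_stored_energy_antimono:
  assumes "i \<in> S" "0 \<le> c" "c \<le> t"
  shows "stored_energy E0 r i t \<le> stored_energy E0 r i c"
proof -
  have "0 \<le> integral {c..t} (r i)"
    using assms policy_rate_bounds by (intro integral_nonneg policy_rate_integrable_on) auto
  then show ?thesis using policy_stored_energy_split[OF assms] by simp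
qed

lemma continuous_on_policy_stored_energy:
  assumes "i \<in> S"
  shows "continuous_on {0..b} (\<lambda>t. stored_energy E0 r i t)"
  unfolding policy_stored_energy_eq[OF assms]
  by (intro continuous_intros indefinite_integral_continuous_1 policy_rate_integrable_on assms) simp

lemma nn_integral_policy_rate_Icc:
  assumes "i \<in> S" "0 \<le> t"
  shows "(\<integral>\<^sup>+s. indicator {0..t} s * ennreal (r i s) \<partial>lborel) = ennreal (integral {0..t} (r i))"
  using assms policy_rate_bounds[OF assms(1)]
  by (intro nn_integral_Icc_bounded[OF policy_rate_measurable, of _ _ _ "P i"]) auto

lemma nn_integral_policy_rate_le:
  assumes "i \<in> S"
  shows "(\<integral>\<^sup>+t. indicator {0..} t * ennreal (r i t) \<partial>lborel) \<le> ennreal (E0 i)"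
proof (rule nn_integral_atLeast_le)
  show "(\<lambda>t. ennreal (r i t)) \<in> borel_measurable lborel"
    using policy_rate_measurable[OF assms] by measurable
  fix M :: real assume "0 \<le> M"
  then show "(\<integral>\<^sup>+t. indicator {0..M} t * ennreal (r i t) \<partial>lborel) \<le> ennreal (E0 i)"
    using nn_integral_policy_rate_Icc[OF assms] policy_integral_le[OF assms] by (simp add: ennreal_leI)
qed

lemma nn_integral_policy_rate_le_min:
  assumes i: "i \<in> S" and Am: "A \<in> sets lborel" and A: "A \<subseteq> {0..M}" and M: "0 \<le> M"
    and AL: "emeasure lborel A = ennreal L" and L0: "0 \<le> L"
  shows "(\<integral>\<^sup>+t. indicator A t * ennreal (r i t) \<partial>lborel) \<le> ennreal (min (E0 i) (P i * L))"
proof -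
  have "(\<integral>\<^sup>+t. indicator A t * ennreal (r i t) \<partial>lborel) \<le> (\<integral>\<^sup>+t. indicator {0..M} t * ennreal (r i t) \<partial>lborel)"
    using A by (intro nn_integral_mono) (auto simp: indicator_def)
  also have "\<dots> \<le> ennreal (E0 i)"
    using nn_integral_policy_rate_Icc[OF i M] policy_integral_le[OF i M] by (simp add: ennreal_leI)
  finally have le_E: "(\<integral>\<^sup>+t. indicator A t * ennreal (r i t) \<partial>lborel) \<le> ennreal (E0 i)" .
  have "(\<integral>\<^sup>+t. indicator A t * ennreal (r i t) \<partial>lborel) \<le> (\<integral>\<^sup>+t. ennreal (P i) * indicator A t \<partial>lborel)"
  proof (intro nn_integral_mono)
    fix t
    show "indicator A t * ennreal (r i t) \<le> ennreal (P i) * indicator A t"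
    proof (cases "t \<in> A")
      case True
      then have "0 \<le> t" using A by auto
      then have "ennreal (r i t) \<le> ennreal (P i)" using policy_rate_bounds[OF i] by (intro ennreal_leI) auto
      then show ?thesis using True by simp
    qed simp
  qed
  also have "\<dots> = ennreal (P i) * ennreal L" using nn_integral_cmult_indicator[OF Am] AL by simp
  also have "\<dots> = ennreal (P i * L)" by (rule ennreal_mult[symmetric]) (use Ppos i L0 in auto)
  finally have "(\<integral>\<^sup>+t. indicator A t * ennreal (r i t) \<partial>lborel) \<le> ennreal (P i * L)" .
  with le_E show ?thesis by (cases "E0 i \<le> P i * L") (auto simp: min_def)
qed

lemma served_excess_le_ep_stores:
  assumes p: "0 \<le> p" and M: "0 \<le> M"
  shows "(\<integral>\<^sup>+t. indicator {0..M} t * ennreal (max 0 ((\<Sum>i\<in>S. r i t) - p)) \<partial>lborel) \<le> ep_stores S P E0 p"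
proof -
  define R where "R t = (\<Sum>i\<in>S. r i t)" for t
  have Rm: "R \<in> borel_measurable lborel" unfolding R_def using policy_sum_measurable by simp
  have rm: "\<And>i. i \<in> S \<Longrightarrow> r i \<in> borel_measurable lborel" by (rule policy_rate_measurable)
  define A where "A = {t\<in>{0..M}. p < R t}"
  have Am: "A \<in> sets lborel" unfolding A_def using Rm by measurable
  have "emeasure lborel A \<le> emeasure lborel {0..M}" unfolding A_def by (intro emeasure_mono) auto
  then have Afin: "emeasure lborel A \<noteq> \<infinity>" using M by (auto simp: top_unique)
  define L where "L = measure lborel A"
  have AL: "emeasure lborel A = ennreal L" unfolding L_def using Afin by (simp add: emeasure_eq_ennreal_measure)
  have L0: "0 \<le> L" unfolding L_def by simp
  have excess_eq: "(\<integral>\<^sup>+t. indicator {0..M} t * ennreal (max 0 (R t - p)) \<partial>lborel)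
      = (\<integral>\<^sup>+t. indicator A t * ennreal (R t - p) \<partial>lborel)"
    by (intro nn_integral_cong) (auto simp: A_def indicator_def max_def)
  have shift_by_p: "(\<integral>\<^sup>+t. indicator A t * ennreal (R t) \<partial>lborel)
      = (\<integral>\<^sup>+t. indicator A t * ennreal (R t - p) \<partial>lborel) + ennreal (p * L)"
  proof -
    have "(\<integral>\<^sup>+t. indicator A t * ennreal (R t) \<partial>lborel)
        = (\<integral>\<^sup>+t. indicator A t * ennreal (R t - p) + ennreal p * indicator A t \<partial>lborel)"
      using p by (intro nn_integral_cong) (auto simp: A_def indicator_def ennreal_plus[symmetric])
    also have "\<dots> = (\<integral>\<^sup>+t. indicator A t * ennreal (R t - p) \<partial>lborel) + ennreal p * emeasure lborel A"
      using Rm Am by (subst nn_integral_add) (auto simp: nn_integral_cmult_indicator)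
    finally show ?thesis using AL p L0 by (simp add: ennreal_mult)
  qed
  have sum_over_stores: "(\<integral>\<^sup>+t. indicator A t * ennreal (R t) \<partial>lborel)
      = (\<Sum>i\<in>S. \<integral>\<^sup>+t. indicator A t * ennreal (r i t) \<partial>lborel)"
  proof -
    have "(\<integral>\<^sup>+t. indicator A t * ennreal (R t) \<partial>lborel) = (\<integral>\<^sup>+t. (\<Sum>i\<in>S. indicator A t * ennreal (r i t)) \<partial>lborel)"
    proof (intro nn_integral_cong)
      fix t
      show "indicator A t * ennreal (R t) = (\<Sum>i\<in>S. indicator A t * ennreal (r i t))"
      proof (cases "t \<in> A")
        case True
        then have "0 \<le> t" unfolding A_def by auto
        then show ?thesis using True policy_rate_bounds unfolding R_def by (subst sum_ennreal[symmetric]) auto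
      qed simp
    qed
    also have "\<dots> = (\<Sum>i\<in>S. \<integral>\<^sup>+t. indicator A t * ennreal (r i t) \<partial>lborel)"
      using rm Am by (intro nn_integral_sum) auto
    finally show ?thesis .
  qed
  have store_bound: "(\<integral>\<^sup>+t. indicator A t * ennreal (r i t) \<partial>lborel) \<le> ennreal (min (E0 i) (P i * L))"
    if "i \<in> S" for i
    using nn_integral_policy_rate_le_min[OF that Am _ M AL L0] unfolding A_def by blast
  have "(\<integral>\<^sup>+t. indicator A t * ennreal (R t - p) \<partial>lborel) + ennreal (p * L)
      \<le> ep_stores S P E0 p + ennreal (p * L)"
    unfolding shift_by_p[symmetric] sum_over_stores
    using sum_mono[OF store_bound, of S] sum_min_energy_le_ep_stores[OF fin Ppos policy_E0_nonneg L0 p] by (rule order_trans)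
  then have "(\<integral>\<^sup>+t. indicator A t * ennreal (R t - p) \<partial>lborel) \<le> ep_stores S P E0 p"
    by (subst (asm) add.commute, subst (asm) (2) add.commute) (simp add: ennreal_add_left_cancel_le)
  then show ?thesis using excess_eq unfolding R_def by simp
qed

lemma served_excess_atLeast_le_ep_stores:
  assumes "0 \<le> p"
  shows "(\<integral>\<^sup>+t. indicator {0..} t * ennreal (max 0 ((\<Sum>i\<in>S. r i t) - p)) \<partial>lborel) \<le> ep_stores S P E0 p"
  using policy_sum_measurable by (intro nn_integral_atLeast_le served_excess_le_ep_stores assms) auto

end

definition horizon :: "ereal \<Rightarrow> real set" where
  "horizon T = {t. 0 \<le> t \<and> ereal t \<le> T}"

lemma horizon_measurable: "horizon T \<in> sets lborel"
proof (cases T)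
  case (real x)
  then have "horizon T = {0..x}" unfolding horizon_def by auto
  then show ?thesis by simp
next
  case PInf
  then have "horizon T = {0..}" unfolding horizon_def by auto
  then show ?thesis by simp
next
  case MInf
  then have "horizon T = {}" unfolding horizon_def by auto
  then show ?thesis by simp
qed

lemma ep_demand_le_unserved_add_ep_stores:
  assumes fin: "finite S" and Ppos: "\<forall>i\<in>S. 0 < P i"
    and dint: "\<forall>a\<ge>0. set_integrable lborel {0..a} d"
    and pol: "is_policy S Ebar P E0 d r" and p: "0 \<le> p"
  shows "ep_demand d 0 T p \<le> unserved S d r T + ep_stores S P E0 p"
proof -
  define D where "D t = (if 0 \<le> t then d t else 0)" for t
  have Dm: "D \<in> borel_measurable lborel" unfolding D_def using borel_measurable_locally_integrable_on_nonneg[OF dint] .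
  define R where "R t = (\<Sum>i\<in>S. r i t)" for t
  have Rm: "R \<in> borel_measurable lborel" unfolding R_def using policy_sum_measurable[OF fin Ppos pol] by simp
  define Ts where "Ts = horizon T"
  have Tsm: "Ts \<in> sets lborel" unfolding Ts_def by (rule horizon_measurable)
  have "ep_demand d 0 T p = (\<integral>\<^sup>+u. indicator Ts u * ennreal (max 0 (D u - p)) \<partial>lborel)"
    unfolding ep_demand_def Ts_def horizon_def D_def by (intro nn_integral_cong) (auto simp: indicator_def)
  also have "\<dots> \<le> (\<integral>\<^sup>+u. indicator Ts u * ennreal (max (D u - R u) 0) + indicator Ts u * ennreal (max 0 (R u - p)) \<partial>lborel)"
  proof (intro nn_integral_mono)
    fix u
    have "ennreal (max 0 (D u - p)) \<le> ennreal (max (D u - R u) 0 + max 0 (R u - p))"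
      by (intro ennreal_leI) auto
    also have "\<dots> = ennreal (max (D u - R u) 0) + ennreal (max 0 (R u - p))" by (intro ennreal_plus) auto
    finally show "indicator Ts u * ennreal (max 0 (D u - p)) \<le> indicator Ts u * ennreal (max (D u - R u) 0) + indicator Ts u * ennreal (max 0 (R u - p))"
      by (auto simp: indicator_def)
  qed
  also have "\<dots> = (\<integral>\<^sup>+u. indicator Ts u * ennreal (max (D u - R u) 0) \<partial>lborel) + (\<integral>\<^sup>+u. indicator Ts u * ennreal (max 0 (R u - p)) \<partial>lborel)"
    using Tsm Dm Rm by (intro nn_integral_add) auto
  also have "\<dots> \<le> unserved S d r T + ep_stores S P E0 p"
  proof (intro add_mono)
    show "(\<integral>\<^sup>+u. indicator Ts u * ennreal (max (D u - R u) 0) \<partial>lborel) \<le> unserved S d r T"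
      unfolding unserved_def Ts_def horizon_def D_def R_def by (intro nn_integral_mono) (auto simp: indicator_def)
    have "(\<integral>\<^sup>+u. indicator Ts u * ennreal (max 0 (R u - p)) \<partial>lborel) \<le> (\<integral>\<^sup>+u. indicator {0..} u * ennreal (max 0 (R u - p)) \<partial>lborel)"
      unfolding Ts_def horizon_def by (intro nn_integral_mono) (auto simp: indicator_def)
    also have "\<dots> \<le> ep_stores S P E0 p" unfolding R_def by (rule served_excess_atLeast_le_ep_stores[OF fin Ppos pol p])
    finally show "(\<integral>\<^sup>+u. indicator Ts u * ennreal (max 0 (R u - p)) \<partial>lborel) \<le> ep_stores S P E0 p" .
  qed
  finally show ?thesis .
qed

section \<open>GGDDF attains the bound\<close>

lemma ggddf_rates_duration_order:
  assumes rule: "ggddf_rates S P E x \<rho>" and Ppos: "\<forall>k\<in>S. 0 < P k"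
    and i: "i \<in> S" and j: "j \<in> S" and longer: "E j / P j < E i / P i" and Ej: "0 \<le> E j"
    and \<rho>j: "\<rho> j \<le> P j" and \<rho>i: "0 \<le> \<rho> i"
  shows "\<rho> j / P j \<le> \<rho> i / P i"
proof (cases "\<rho> j = 0")
  case True
  have "0 < P i" using Ppos i by simp
  then show ?thesis using True \<rho>i by simp
next
  case False
  have pi: "0 < P i" and pj: "0 < P j" using Ppos i j by auto
  then have "0 < E i / P i" using Ej longer by (smt (verit) divide_nonneg_pos)
  then have "0 < E i" using pi by (simp add: zero_less_divide_iff)
  then have "\<rho> i = P i" using ggddf_rates_saturates_longer[OF rule j False i _ longer] by blast
  then show ?thesis using \<rho>j pi pj by simp
qed

lemma ggddf_rates_sum_shorter:
  assumes rule: "ggddf_rates S P E x \<rho>" and fin: "finite S" and Ppos: "\<forall>k\<in>S. 0 < P k"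
    and NS: "N \<subseteq> S" and Npos: "\<forall>i\<in>N. 0 < E i"
    and longer: "\<forall>i\<in>N. \<forall>j\<in>S - N. E j / P j < E i / P i"
    and bounds: "\<forall>k\<in>S. 0 \<le> \<rho> k \<and> \<rho> k \<le> P k"
  shows "(\<Sum>j\<in>S - N. \<rho> j) = max 0 ((\<Sum>k\<in>S. \<rho> k) - (\<Sum>i\<in>N. P i))"
proof -
  have split: "(\<Sum>k\<in>S. \<rho> k) = (\<Sum>j\<in>S - N. \<rho> j) + (\<Sum>i\<in>N. \<rho> i)"
    using fin NS by (simp add: sum.subset_diff)
  have N_le: "(\<Sum>i\<in>N. \<rho> i) \<le> (\<Sum>i\<in>N. P i)" using bounds NS by (intro sum_mono) auto
  have rest_nonneg: "0 \<le> (\<Sum>j\<in>S - N. \<rho> j)" using bounds by (intro sum_nonneg) auto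
  show ?thesis
  proof (cases "\<exists>j\<in>S - N. \<rho> j \<noteq> 0")
    case False
    then have "(\<Sum>j\<in>S - N. \<rho> j) = 0" by simp
    then show ?thesis using split N_le by simp
  next
    case True
    then obtain j where j: "j \<in> S - N" "\<rho> j \<noteq> 0" by auto
    have "\<rho> i = P i" if "i \<in> N" for i
      using ggddf_rates_saturates_longer[OF rule _ j(2)] j(1) that NS Npos longer by blast
    then have "(\<Sum>i\<in>N. \<rho> i) = (\<Sum>i\<in>N. P i)" by simp
    then show ?thesis using split rest_nonneg by simp
  qed
qed

lemma ggddf_rates_sum_ge_min:
  assumes rule: "ggddf_rates S P E x \<rho>" and fin: "finite S" and Ppos: "\<forall>k\<in>S. 0 < P k"
    and NS: "N \<subseteq> S" and Npos: "\<forall>i\<in>N. 0 < E i"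
  shows "min x (\<Sum>i\<in>N. P i) \<le> (\<Sum>k\<in>S. \<rho> k)"
proof -
  have "(\<Sum>i\<in>N. P i) \<le> (\<Sum>i\<in>{i\<in>S. 0 < E i}. P i)"
    using NS Npos Ppos fin by (intro sum_mono2) auto
  then show ?thesis using ggddf_rates_sum[OF rule] by linarith
qed

text \<open>When every store of \<open>N\<close> is longer than every other store, the burst-power profile
  exceeds the level \<open>\<Sum>\<^sub>i\<^sub>\<in>\<^sub>N P\<^sub>i\<close> exactly by the profile of the other stores.\<close>
lemma ep_stores_at_saturation_level:
  assumes fin: "finite S" and Ppos: "\<forall>i\<in>S. 0 < P i" and Enn: "\<forall>i\<in>S. 0 \<le> E i"
    and NS: "N \<subseteq> S" and longer: "\<forall>i\<in>N. \<forall>j\<in>S - N. E j / P j < E i / P i"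
  shows "ep_stores S P E (\<Sum>i\<in>N. P i) = (\<Sum>j\<in>S - N. ennreal (E j))"
proof -
  define p where "p = (\<Sum>i\<in>N. P i)"
  have "indicator {0..} u * ennreal (max 0 (burst_power S P E u - p))
      = (\<Sum>j\<in>S - N. ennreal (P j) * indicator {0..E j / P j} u)" for u :: real
  proof (cases "0 \<le> u")
    case False
    then show ?thesis by simp
  next
    case u0: True
    define f where "f k = P k * indicator {..E k / P k} u" for k
    have f_nonneg: "0 \<le> f k" if "k \<in> S" for k unfolding f_def using Ppos that by (auto simp: indicator_def)
    have burst: "burst_power S P E u = (\<Sum>j\<in>S - N. f j) + (\<Sum>i\<in>N. f i)"
      unfolding burst_power_eq_sum_indicator[OF fin] f_def[symmetric] using fin NS by (simp add: sum.subset_diff)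
    have "max 0 (burst_power S P E u - p) = (\<Sum>j\<in>S - N. f j)"
    proof (cases "\<exists>j\<in>S - N. u \<le> E j / P j")
      case True
      then obtain j where j: "j \<in> S - N" "u \<le> E j / P j" by auto
      have "f i = P i" if "i \<in> N" for i
      proof -
        have "E j / P j < E i / P i" using longer that j(1) by blast
        then have "u \<le> E i / P i" using j(2) by linarith
        then show ?thesis unfolding f_def by (simp add: indicator_def)
      qed
      then have "(\<Sum>i\<in>N. f i) = p" unfolding p_def by simp
      moreover have "0 \<le> (\<Sum>j\<in>S - N. f j)" using f_nonneg by (intro sum_nonneg) auto
      ultimately show ?thesis using burst by simp
    next
      case False
      then have "(\<Sum>j\<in>S - N. f j) = 0" unfolding f_def by (intro sum.neutral) (auto simp: indicator_def)
      moreover have "(\<Sum>i\<in>N. f i) \<le> p" unfolding p_def f_def using NS Ppos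
        by (intro sum_mono) (auto simp: indicator_def less_imp_le subsetD)
      ultimately show ?thesis using burst by simp
    qed
    then have "indicator {0..} u * ennreal (max 0 (burst_power S P E u - p)) = ennreal (\<Sum>j\<in>S - N. f j)"
      using u0 by simp
    also have "\<dots> = (\<Sum>j\<in>S - N. ennreal (f j))" using f_nonneg by (intro sum_ennreal[symmetric]) auto
    also have "\<dots> = (\<Sum>j\<in>S - N. ennreal (P j) * indicator {0..E j / P j} u)"
      unfolding f_def using u0 by (intro sum.cong refl) (auto simp: indicator_def)
    finally show ?thesis .
  qed
  then have "ep_stores S P E p = (\<integral>\<^sup>+u. (\<Sum>j\<in>S - N. ennreal (P j) * indicator {0..E j / P j} u) \<partial>lborel)"
    unfolding ep_stores_def by simp
  also have "\<dots> = (\<Sum>j\<in>S - N. ennreal (E j))" using fin Ppos Enn by (intro nn_integral_sum_bars) auto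
  finally show ?thesis unfolding p_def .
qed

definition never_empty :: "'i set \<Rightarrow> ('i \<Rightarrow> real) \<Rightarrow> ('i \<Rightarrow> real \<Rightarrow> real) \<Rightarrow> ereal \<Rightarrow> 'i set" where
  "never_empty S E0 r T = {i\<in>S. \<forall>t\<in>horizon T. 0 < stored_energy E0 r i t}"

context
  fixes S :: "'i set" and Ebar P E0 :: "'i \<Rightarrow> real" and d :: "real \<Rightarrow> real" and r :: "'i \<Rightarrow> real \<Rightarrow> real"
  assumes fin: "finite S" and Ppos: "\<forall>i\<in>S. 0 < P i" and gg: "is_ggddf_policy S Ebar P E0 d r"
begin

lemma ggddf_is_policy: "is_policy S Ebar P E0 d r"
  using gg unfolding is_ggddf_policy_def by simp

lemma ggddf_rates_ae:
  "AE t in lborel. 0 \<le> t \<longrightarrow> ggddf_rates S P (\<lambda>i. stored_energy E0 r i t) (d t) (\<lambda>i. r i t)"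
  using gg unfolding is_ggddf_policy_def by simp

lemma ggddf_stored_energy_nonneg: "i \<in> S \<Longrightarrow> 0 \<le> t \<Longrightarrow> 0 \<le> stored_energy E0 r i t"
  using ggddf_is_policy unfolding is_policy_def by simp

text \<open>While \<open>i\<close> is strictly longer than \<open>j\<close>, GGDDF discharges \<open>i\<close> relatively at least as fast as \<open>j\<close>.\<close>
lemma ggddf_duration_gap_stays_nonpos:
  assumes i: "i \<in> S" and j: "j \<in> S" and t: "0 \<le> t" "t \<le> t'"
    and le: "stored_energy E0 r i t / P i \<le> stored_energy E0 r j t / P j"
  shows "stored_energy E0 r i t' / P i \<le> stored_energy E0 r j t' / P j"
proof -
  note pol = ggddf_is_policy
  have pi: "0 < P i" and pj: "0 < P j" using Ppos i j by auto
  define H where "H s = stored_energy E0 r i s / P i - stored_energy E0 r j s / P j" for s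
  define h where "h s = r i s / P i - r j s / P j" for s
  have "H t' \<le> 0"
  proof (rule integral_flow_stays_nonpos[of t t' H h 2])
    have "continuous_on {0..t'} H" unfolding H_def
      using pi pj by (intro continuous_intros continuous_on_policy_stored_energy[OF fin Ppos pol] i j) auto
    then show "continuous_on {t..t'} H" by (rule continuous_on_subset) (use t in auto)
    show "h \<in> borel_measurable lborel"
      unfolding h_def using policy_rate_measurable[OF fin Ppos pol] i j by measurable
    show "\<bar>h s\<bar> \<le> 2" if "s \<in> {t..t'}" for s
    proof -
      have "0 \<le> s" using that t by auto
      then have "0 \<le> r i s / P i" "r i s / P i \<le> 1" "0 \<le> r j s / P j" "r j s / P j \<le> 1"
        using policy_rate_bounds[OF fin Ppos pol i] policy_rate_bounds[OF fin Ppos pol j] pi pj by auto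
      then show ?thesis unfolding h_def by linarith
    qed
    show "H s = H c - integral {c..s} h" if "t \<le> c" "c \<le> s" "s \<le> t'" for c s
    proof -
      have c0: "0 \<le> c" using that t by auto
      have "integral {c..s} h = integral {c..s} (\<lambda>x. r i x / P i) - integral {c..s} (\<lambda>x. r j x / P j)"
        unfolding h_def
        by (intro integral_diff integrable_on_divide policy_rate_integrable_on[OF fin Ppos pol] i j c0)
      also have "\<dots> = integral {c..s} (r i) / P i - integral {c..s} (r j) / P j" by simp
      finally show ?thesis unfolding H_def
        using policy_stored_energy_split[OF fin Ppos pol i c0 that(2)]
          policy_stored_energy_split[OF fin Ppos pol j c0 that(2)]
        by (simp add: diff_divide_distrib)
    qed
    show "AE s in lborel. t \<le> s \<longrightarrow> s \<le> t' \<longrightarrow> 0 < H s \<longrightarrow> 0 \<le> h s"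
      using ggddf_rates_ae
    proof eventually_elim
      case (elim s)
      show ?case
      proof (intro impI)
        assume s: "t \<le> s" "s \<le> t'" "0 < H s"
        have s0: "0 \<le> s" using s t by auto
        have "r j s / P j \<le> r i s / P i"
          using s(3) ggddf_stored_energy_nonneg[OF j s0] policy_rate_bounds[OF fin Ppos pol j s0]
            policy_rate_bounds[OF fin Ppos pol i s0] elim s0 unfolding H_def
          by (intro ggddf_rates_duration_order[OF _ Ppos i j]) auto
        then show "0 \<le> h s" unfolding h_def by simp
      qed
    qed
    show "H t \<le> 0" using le unfolding H_def by simp
  qed (use t in auto)
  then show ?thesis unfolding H_def by simp
qed

lemma never_empty_longer:
  assumes i: "i \<in> never_empty S E0 r T" and j: "j \<in> S - never_empty S E0 r T" and t: "t \<in> horizon T"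
  shows "stored_energy E0 r j t / P j < stored_energy E0 r i t / P i"
proof (rule ccontr)
  assume "\<not> ?thesis"
  then have le: "stored_energy E0 r i t / P i \<le> stored_energy E0 r j t / P j" by simp
  have iS: "i \<in> S" and jS: "j \<in> S" using i j unfolding never_empty_def by auto
  obtain t\<^sub>1 where t\<^sub>1: "t\<^sub>1 \<in> horizon T" "stored_energy E0 r j t\<^sub>1 \<le> 0"
    using j unfolding never_empty_def by auto
  define t' where "t' = max t t\<^sub>1"
  have t0: "0 \<le> t" "0 \<le> t\<^sub>1" using t t\<^sub>1 unfolding horizon_def by auto
  have "t' \<in> horizon T" using t t\<^sub>1 unfolding horizon_def t'_def by (auto simp: max_def)
  then have "0 < stored_energy E0 r i t'" using i unfolding never_empty_def by auto
  moreover have "stored_energy E0 r j t' \<le> 0"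
    using policy_stored_energy_antimono[OF fin Ppos ggddf_is_policy jS t0(2), of t'] t\<^sub>1(2)
    unfolding t'_def by simp
  moreover have "stored_energy E0 r i t' / P i \<le> stored_energy E0 r j t' / P j"
    using ggddf_duration_gap_stays_nonpos[OF iS jS t0(1) _ le] unfolding t'_def by simp
  moreover have "0 < P i" "0 < P j" using Ppos iS jS by auto
  ultimately show False by (smt (verit) divide_nonpos_pos divide_pos_pos)
qed

lemma emptied_store_discharges_all:
  assumes j: "j \<in> S - never_empty S E0 r T"
  shows "(\<integral>\<^sup>+t. indicator (horizon T) t * ennreal (r j t) \<partial>lborel) = ennreal (E0 j)"
proof (rule antisym)
  note pol = ggddf_is_policy
  have jS: "j \<in> S" using j by auto
  have "(\<integral>\<^sup>+t. indicator (horizon T) t * ennreal (r j t) \<partial>lborel)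
      \<le> (\<integral>\<^sup>+t. indicator {0..} t * ennreal (r j t) \<partial>lborel)"
    unfolding horizon_def by (intro nn_integral_mono) (auto simp: indicator_def)
  also have "\<dots> \<le> ennreal (E0 j)" by (rule nn_integral_policy_rate_le[OF fin Ppos pol jS])
  finally show "(\<integral>\<^sup>+t. indicator (horizon T) t * ennreal (r j t) \<partial>lborel) \<le> ennreal (E0 j)" .
  obtain t\<^sub>1 where t\<^sub>1: "t\<^sub>1 \<in> horizon T" "stored_energy E0 r j t\<^sub>1 \<le> 0"
    using j unfolding never_empty_def by auto
  have t\<^sub>1_0: "0 \<le> t\<^sub>1" using t\<^sub>1 unfolding horizon_def by auto
  have "E0 j \<le> integral {0..t\<^sub>1} (r j)"
    using t\<^sub>1(2) policy_stored_energy_eq[OF fin Ppos pol jS] by simp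
  then have "ennreal (E0 j) \<le> ennreal (integral {0..t\<^sub>1} (r j))" by (rule ennreal_leI)
  also have "\<dots> = (\<integral>\<^sup>+t. indicator {0..t\<^sub>1} t * ennreal (r j t) \<partial>lborel)"
    using nn_integral_policy_rate_Icc[OF fin Ppos pol jS t\<^sub>1_0] by simp
  also have "\<dots> \<le> (\<integral>\<^sup>+t. indicator (horizon T) t * ennreal (r j t) \<partial>lborel)"
  proof (intro nn_integral_mono)
    fix s
    have "s \<in> horizon T" if "s \<in> {0..t\<^sub>1}"
      using t\<^sub>1(1) that unfolding horizon_def by (auto intro: order_trans[of "ereal s" "ereal t\<^sub>1"])
    then show "indicator {0..t\<^sub>1} s * ennreal (r j s) \<le> indicator (horizon T) s * ennreal (r j s)"
      by (auto simp: indicator_def)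
  qed
  finally show "ennreal (E0 j) \<le> (\<integral>\<^sup>+t. indicator (horizon T) t * ennreal (r j t) \<partial>lborel)" .
qed

lemma ggddf_served_split:
  fixes T :: ereal
  defines "N \<equiv> never_empty S E0 r T"
  shows "AE t in lborel. t \<in> horizon T \<longrightarrow>
    (\<Sum>j\<in>S - N. r j t) = max 0 ((\<Sum>k\<in>S. r k t) - (\<Sum>i\<in>N. P i)) \<and>
    min (d t) (\<Sum>i\<in>N. P i) \<le> (\<Sum>k\<in>S. r k t) \<and> (\<Sum>k\<in>S. r k t) \<le> d t"
  using ggddf_rates_ae
proof eventually_elim
  case (elim t)
  show ?case
  proof
    assume t: "t \<in> horizon T"
    then have t0: "0 \<le> t" unfolding horizon_def by auto
    have rule: "ggddf_rates S P (\<lambda>k. stored_energy E0 r k t) (d t) (\<lambda>k. r k t)" using elim t0 by simp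
    have NS: "N \<subseteq> S" unfolding N_def never_empty_def by auto
    have Npos: "\<forall>i\<in>N. 0 < stored_energy E0 r i t" using t unfolding N_def never_empty_def by auto
    have longer: "\<forall>i\<in>N. \<forall>j\<in>S - N. stored_energy E0 r j t / P j < stored_energy E0 r i t / P i"
      using never_empty_longer t unfolding N_def by blast
    have bounds: "\<forall>k\<in>S. 0 \<le> r k t \<and> r k t \<le> P k"
      using policy_rate_bounds[OF fin Ppos ggddf_is_policy _ t0] by blast
    show "(\<Sum>j\<in>S - N. r j t) = max 0 ((\<Sum>k\<in>S. r k t) - (\<Sum>i\<in>N. P i)) \<and>
      min (d t) (\<Sum>i\<in>N. P i) \<le> (\<Sum>k\<in>S. r k t) \<and> (\<Sum>k\<in>S. r k t) \<le> d t"
      using ggddf_rates_sum_shorter[OF rule fin Ppos NS Npos longer bounds]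
        ggddf_rates_sum_ge_min[OF rule fin Ppos NS Npos] ggddf_is_policy t0
      unfolding is_policy_def by simp
  qed
qed

lemma served_excess_ggddf:
  fixes T :: ereal
  defines "N \<equiv> never_empty S E0 r T"
  shows "(\<integral>\<^sup>+t. indicator (horizon T) t * ennreal (max 0 ((\<Sum>k\<in>S. r k t) - (\<Sum>i\<in>N. P i))) \<partial>lborel)
    = (\<Sum>j\<in>S - N. ennreal (E0 j))"
proof -
  note pol = ggddf_is_policy
  have "(\<integral>\<^sup>+t. indicator (horizon T) t * ennreal (max 0 ((\<Sum>k\<in>S. r k t) - (\<Sum>i\<in>N. P i))) \<partial>lborel)
      = (\<integral>\<^sup>+t. (\<Sum>j\<in>S - N. indicator (horizon T) t * ennreal (r j t)) \<partial>lborel)"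
    using ggddf_served_split[of T] unfolding N_def[symmetric]
  proof (intro nn_integral_cong_AE, eventually_elim)
    case (elim t)
    show ?case
    proof (cases "t \<in> horizon T")
      case True
      then have t0: "0 \<le> t" unfolding horizon_def by auto
      have "ennreal (max 0 ((\<Sum>k\<in>S. r k t) - (\<Sum>i\<in>N. P i))) = ennreal (\<Sum>j\<in>S - N. r j t)"
        using elim True by simp
      also have "\<dots> = (\<Sum>j\<in>S - N. ennreal (r j t))"
        using policy_rate_bounds[OF fin Ppos pol _ t0] by (intro sum_ennreal[symmetric]) auto
      finally show ?thesis using True by (simp add: sum_distrib_left)
    qed simp
  qed
  also have "\<dots> = (\<Sum>j\<in>S - N. \<integral>\<^sup>+t. indicator (horizon T) t * ennreal (r j t) \<partial>lborel)"
    using horizon_measurable policy_rate_measurable[OF fin Ppos pol] by (intro nn_integral_sum) auto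
  also have "\<dots> = (\<Sum>j\<in>S - N. ennreal (E0 j))"
    using emptied_store_discharges_all unfolding N_def by simp
  finally show ?thesis .
qed

lemma unserved_add_served_excess_ggddf:
  fixes T :: ereal
  assumes dint: "\<forall>a\<ge>0. set_integrable lborel {0..a} d"
  defines "N \<equiv> never_empty S E0 r T"
  shows "unserved S d r T + (\<integral>\<^sup>+t. indicator (horizon T) t * ennreal (max 0 ((\<Sum>k\<in>S. r k t) - (\<Sum>i\<in>N. P i))) \<partial>lborel)
    = ep_demand d 0 T (\<Sum>i\<in>N. P i)"
proof -
  define D where "D t = (if 0 \<le> t then d t else 0)" for t
  define R where "R t = (\<Sum>k\<in>S. r k t)" for t
  define p where "p = (\<Sum>i\<in>N. P i)"
  have Dm: "D \<in> borel_measurable lborel"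
    unfolding D_def using borel_measurable_locally_integrable_on_nonneg[OF dint] .
  have Rm: "R \<in> borel_measurable lborel"
    unfolding R_def using policy_sum_measurable[OF fin Ppos ggddf_is_policy] .
  have "unserved S d r T = (\<integral>\<^sup>+t. indicator (horizon T) t * ennreal (max (D t - R t) 0) \<partial>lborel)"
    unfolding unserved_def horizon_def D_def R_def by (intro nn_integral_cong) (auto simp: indicator_def)
  then have "unserved S d r T + (\<integral>\<^sup>+t. indicator (horizon T) t * ennreal (max 0 (R t - p)) \<partial>lborel)
      = (\<integral>\<^sup>+t. indicator (horizon T) t * ennreal (max (D t - R t) 0)
          + indicator (horizon T) t * ennreal (max 0 (R t - p)) \<partial>lborel)"
    using horizon_measurable Dm Rm by (simp add: nn_integral_add)
  also have "\<dots> = (\<integral>\<^sup>+t. indicator (horizon T) t * ennreal (max 0 (D t - p)) \<partial>lborel)"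
    using ggddf_served_split[of T] unfolding N_def[symmetric] R_def[symmetric] p_def[symmetric]
  proof (intro nn_integral_cong_AE, eventually_elim)
    case (elim t)
    show ?case
    proof (cases "t \<in> horizon T")
      case True
      then have "min (D t) p \<le> R t" "R t \<le> D t" using elim unfolding D_def horizon_def by auto
      then have "max (D t - R t) 0 + max 0 (R t - p) = max 0 (D t - p)"
        by (auto simp: min_def max_def split: if_splits)
      then have "ennreal (max (D t - R t) 0) + ennreal (max 0 (R t - p)) = ennreal (max 0 (D t - p))"
        by (metis ennreal_plus max.cobounded1 max.cobounded2)
      then show ?thesis using True by simp
    qed simp
  qed
  also have "\<dots> = ep_demand d 0 T p"
    unfolding ep_demand_def horizon_def D_def by (intro nn_integral_cong) (auto simp: indicator_def)
  finally show ?thesis unfolding R_def p_def .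
qed

lemma ep_stores_ggddf_level:
  fixes T :: ereal
  assumes T: "0 < T"
  defines "N \<equiv> never_empty S E0 r T"
  shows "ep_stores S P E0 (\<Sum>i\<in>N. P i) = (\<Sum>j\<in>S - N. ennreal (E0 j))"
proof (rule ep_stores_at_saturation_level[OF fin Ppos policy_E0_nonneg[OF fin Ppos ggddf_is_policy]])
  show "N \<subseteq> S" unfolding N_def never_empty_def by auto
  have "0 \<in> horizon T" using T unfolding horizon_def by (simp add: less_imp_le zero_ereal_def)
  moreover have stored0: "stored_energy E0 r k 0 = E0 k" if "k \<in> S" for k
    using policy_stored_energy_eq[OF fin Ppos ggddf_is_policy that] by simp
  ultimately show "\<forall>i\<in>N. \<forall>j\<in>S - N. E0 j / P j < E0 i / P i"
  proof (intro ballI)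
    fix i j assume i: "i \<in> N" and j: "j \<in> S - N"
    have "stored_energy E0 r j 0 / P j < stored_energy E0 r i 0 / P i"
      using never_empty_longer[of i T j 0] i j \<open>0 \<in> horizon T\<close> unfolding N_def by blast
    then show "E0 j / P j < E0 i / P i" using stored0 \<open>N \<subseteq> S\<close> i j by auto
  qed
qed

lemma ggddf_unserved_add_ep_stores_eq_ep_demand:
  assumes dint: "\<forall>a\<ge>0. set_integrable lborel {0..a} d" and T: "0 < T"
  shows "\<exists>p\<ge>0. unserved S d r T + ep_stores S P E0 p = ep_demand d 0 T p"
proof (intro exI conjI)
  show "0 \<le> (\<Sum>i\<in>never_empty S E0 r T. P i)"
    using Ppos unfolding never_empty_def by (intro sum_nonneg) auto
  show "unserved S d r T + ep_stores S P E0 (\<Sum>i\<in>never_empty S E0 r T. P i)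
      = ep_demand d 0 T (\<Sum>i\<in>never_empty S E0 r T. P i)"
    using unserved_add_served_excess_ggddf[OF dint] served_excess_ggddf ep_stores_ggddf_level[OF T]
    by simp
qed

end

lemma enn2ereal_diff_le:
  fixes a b c :: ennreal
  assumes "a \<le> b + c" "c \<noteq> top"
  shows "enn2ereal a - enn2ereal c \<le> enn2ereal b"
proof -
  obtain x where x: "0 \<le> x" "c = ennreal x" using assms(2) by (cases c) auto
  have "enn2ereal a \<le> enn2ereal b + ereal x" using assms(1) x
    by (metis enn2ereal_ennreal less_eq_ennreal.rep_eq plus_ennreal.rep_eq)
  then show ?thesis using x by (simp add: ereal_minus_le_iff)
qed

lemma enn2ereal_eq_diff:
  fixes a b c :: ennreal
  assumes "b + c = a" "c \<noteq> top"
  shows "enn2ereal b = enn2ereal a - enn2ereal c"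
proof -
  obtain x where x: "0 \<le> x" "c = ennreal x" using assms(2) by (cases c) auto
  have "enn2ereal a = enn2ereal b + ereal x" using assms(1) x
    by (metis enn2ereal_ennreal plus_ennreal.rep_eq)
  then show ?thesis using x by (cases "enn2ereal b") auto
qed

theorem theorem1:
  fixes S :: "'i set" and Ebar P E0 :: "'i \<Rightarrow> real" and d :: "real \<Rightarrow> real" and T :: ereal
  assumes "finite S"
    and "\<forall>i\<in>S. Ebar i > 0" and "\<forall>i\<in>S. P i > 0"
    and "\<forall>i\<in>S. 0 \<le> E0 i \<and> E0 i \<le> Ebar i"
    and "\<forall>t\<ge>0. d t \<ge> 0"
    and "\<forall>a\<ge>0. set_integrable lborel {0..a} d"
    and "T > 0"
  shows "(\<exists>r. is_ggddf_policy S Ebar P E0 d r) \<and>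
         (\<forall>r. is_ggddf_policy S Ebar P E0 d r \<longrightarrow>
              (\<forall>r'. is_policy S Ebar P E0 d r' \<longrightarrow> unserved S d r T \<le> unserved S d r' T) \<and>
              (\<exists>p\<ge>0. enn2ereal (unserved S d r T) =
                       enn2ereal (ep_demand d 0 T p) - enn2ereal (ep_stores S P E0 p)) \<and>
              (\<forall>p\<ge>0. enn2ereal (ep_demand d 0 T p) - enn2ereal (ep_stores S P E0 p)
                       \<le> enn2ereal (unserved S d r T)))"
proof -
  note fin = assms(1) and Ppos = assms(3) and E0 = assms(4) and dnn = assms(5)
    and dint = assms(6) and T = assms(7)
  have finite_stores: "ep_stores S P E0 p \<noteq> top" if "0 \<le> p" for p
  proof -
    have "ep_stores S P E0 p \<le> ennreal (\<Sum>i\<in>S. E0 i)"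
      using E0 by (intro ep_stores_le_total_energy[OF fin Ppos _ that]) auto
    then show ?thesis using neq_top_trans[OF ennreal_neq_top] by blast
  qed
  have lower_bound: "ep_demand d 0 T p \<le> unserved S d r T + ep_stores S P E0 p"
    if "is_policy S Ebar P E0 d r" "0 \<le> p" for r p
    using ep_demand_le_unserved_add_ep_stores[OF fin Ppos dint that] .
  show ?thesis
  proof (intro conjI allI impI)
    show "\<exists>r. is_ggddf_policy S Ebar P E0 d r" by (rule ggddf_policy_exists[OF fin Ppos E0 dnn dint])
  next
    fix r assume gg: "is_ggddf_policy S Ebar P E0 d r"
    obtain p where p: "0 \<le> p" "unserved S d r T + ep_stores S P E0 p = ep_demand d 0 T p"
      using ggddf_unserved_add_ep_stores_eq_ep_demand[OF fin Ppos gg dint T] by blast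
    show "unserved S d r T \<le> unserved S d r' T" if "is_policy S Ebar P E0 d r'" for r'
    proof -
      have "ep_stores S P E0 p + unserved S d r T \<le> ep_stores S P E0 p + unserved S d r' T"
        using lower_bound[OF that p(1)] p(2) by (simp add: add.commute)
      then show ?thesis
        using finite_stores[OF p(1)] by (simp add: ennreal_add_left_cancel_le infinity_ennreal_def)
    qed
    show "\<exists>p\<ge>0. enn2ereal (unserved S d r T) = enn2ereal (ep_demand d 0 T p) - enn2ereal (ep_stores S P E0 p)"
      using enn2ereal_eq_diff[OF p(2) finite_stores[OF p(1)]] p(1) by blast
    show "enn2ereal (ep_demand d 0 T q) - enn2ereal (ep_stores S P E0 q) \<le> enn2ereal (unserved S d r T)"
      if "0 \<le> q" for q
      using enn2ereal_diff_le[OF lower_bound[OF ggddf_is_policy[OF fin Ppos gg] that] finite_stores[OF that]] .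
  qed
qed

end
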